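(* Let $G=(V,E,I,\{s,t\})$ be a grapht (possibly infinite). Suppose that $s$ is linked and that every system of edge-disjoint $st$-paths that links $s$ uses the edge $e$, where $e\in E\setminus\delta(s)$. Let $C$ be the $\trianglelefteq$-smallest Erdős–Menger $st$-cut that contains $e$. Then $C$ is tight, i.e. every linkage of $s$ is orthogonal to $C$.
   Context: Graphs may have parallel edges but no loops; all paths are finite. A grapht $(V,E,I,T)$ is a graph with a set $T$ of at least two terminal vertices; here $T=\{s,t\}$, so $T$-paths are exactly $st$-paths (paths from $s$ to $t$). $\delta(X)$ is the set of edges with exactly one end in $X$, $\delta(x)=\delta(\{x\})$; a cut is a set $\delta(X)$. For disjoint $A,B\subseteq V$, an $AB$-path has one endpoint in $A$, the other in $B$, and no inner vertex in $A\cup B$; an $AB$-cut is a cut $C$ such that $G-C$ has no $AB$-path. An edge set $C$ is orthogonal to a system $\mathcal{P}$ of edge-disjoint paths if $C$ consists of exactly one edge from each $P\in\mathcal{P}$ (and no other edges). An Erdős–Menger $st$-cut is an $st$-cut orthogonal to some system of edge-disjoint $st$-paths. For Erdős–Menger $st$-cuts $C,C'$, write $C\trianglelefteq C'$ if for every $st$-path $P$, with $<_P$ the linear order of $E(P)$ in the direction from $s$ to $t$, $\min_{<_P}(C\cap E(P))\le\min_{<_P}(C'\cap E(P))$. A system of edge-disjoint $st$-paths links $s$ if it covers $\delta(s)$; it is a linkage of $s$ if it links $s$ and every path in it contains an edge of $\delta(s)$ (i.e. it is minimal with this property); $s$ is linked if some system links it. *)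

theory Defs
  imports Main
begin

text \<open>A graph is given by a vertex set V, an edge set E and an incidence map
  ends assigning to each edge its set of ends (exactly two distinct ends:
  no loops; parallel edges allowed).\<close>

type_synonym ('v,'e) path = "'v list \<times> 'e list"

definition is_graph :: "'v set \<Rightarrow> 'e set \<Rightarrow> ('e \<Rightarrow> 'v set) \<Rightarrow> bool" where
  "is_graph V E ends \<longleftrightarrow> (\<forall>x\<in>E. ends x \<subseteq> V \<and> card (ends x) = 2)"

definition grapht :: "'v set \<Rightarrow> 'e set \<Rightarrow> ('e \<Rightarrow> 'v set) \<Rightarrow> 'v \<Rightarrow> 'v \<Rightarrow> bool" where
  "grapht V E ends s t \<longleftrightarrow> is_graph V E ends \<and> s \<in> V \<and> t \<in> V \<and> s \<noteq> t"

definition delta :: "'e set \<Rightarrow> ('e \<Rightarrow> 'v set) \<Rightarrow> 'v set \<Rightarrow> 'e set" where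
  "delta E ends X = {x \<in> E. card (ends x \<inter> X) = 1}"

definition is_path :: "'v set \<Rightarrow> 'e set \<Rightarrow> ('e \<Rightarrow> 'v set) \<Rightarrow> ('v,'e) path \<Rightarrow> bool" where
  "is_path V E ends P \<longleftrightarrow>
     length (fst P) = Suc (length (snd P)) \<and> distinct (fst P) \<and> distinct (snd P) \<and>
     set (fst P) \<subseteq> V \<and> set (snd P) \<subseteq> E \<and>
     (\<forall>i < length (snd P). ends (snd P ! i) = {fst P ! i, fst P ! Suc i})"

definition st_path :: "'v set \<Rightarrow> 'e set \<Rightarrow> ('e \<Rightarrow> 'v set) \<Rightarrow> 'v \<Rightarrow> 'v \<Rightarrow> ('v,'e) path \<Rightarrow> bool" where
  "st_path V E ends s t P \<longleftrightarrow> is_path V E ends P \<and> hd (fst P) = s \<and> last (fst P) = t"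

definition edges_of :: "('v,'e) path set \<Rightarrow> 'e set" where
  "edges_of \<P> = (\<Union>P\<in>\<P>. set (snd P))"

definition st_system :: "'v set \<Rightarrow> 'e set \<Rightarrow> ('e \<Rightarrow> 'v set) \<Rightarrow> 'v \<Rightarrow> 'v \<Rightarrow> ('v,'e) path set \<Rightarrow> bool" where
  "st_system V E ends s t \<P> \<longleftrightarrow> (\<forall>P\<in>\<P>. st_path V E ends s t P) \<and>
     (\<forall>P\<in>\<P>. \<forall>Q\<in>\<P>. P \<noteq> Q \<longrightarrow> set (snd P) \<inter> set (snd Q) = {})"

definition is_cut :: "'v set \<Rightarrow> 'e set \<Rightarrow> ('e \<Rightarrow> 'v set) \<Rightarrow> 'e set \<Rightarrow> bool" where
  "is_cut V E ends C \<longleftrightarrow> (\<exists>X\<subseteq>V. C = delta E ends X)"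

definition st_cut :: "'v set \<Rightarrow> 'e set \<Rightarrow> ('e \<Rightarrow> 'v set) \<Rightarrow> 'v \<Rightarrow> 'v \<Rightarrow> 'e set \<Rightarrow> bool" where
  "st_cut V E ends s t C \<longleftrightarrow> is_cut V E ends C \<and> \<not> (\<exists>P. st_path V (E - C) ends s t P)"

definition orthogonal :: "'e set \<Rightarrow> ('v,'e) path set \<Rightarrow> bool" where
  "orthogonal C \<P> \<longleftrightarrow> C \<subseteq> edges_of \<P> \<and> (\<forall>P\<in>\<P>. card (C \<inter> set (snd P)) = 1)"

definition EM_cut :: "'v set \<Rightarrow> 'e set \<Rightarrow> ('e \<Rightarrow> 'v set) \<Rightarrow> 'v \<Rightarrow> 'v \<Rightarrow> 'e set \<Rightarrow> bool" where
  "EM_cut V E ends s t C \<longleftrightarrow> st_cut V E ends s t C \<and>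
     (\<exists>\<P>. st_system V E ends s t \<P> \<and> orthogonal C \<P>)"

definition first_pos :: "'e set \<Rightarrow> ('v,'e) path \<Rightarrow> nat" where
  "first_pos C P = (LEAST i. i < length (snd P) \<and> snd P ! i \<in> C)"

definition cut_le :: "'v set \<Rightarrow> 'e set \<Rightarrow> ('e \<Rightarrow> 'v set) \<Rightarrow> 'v \<Rightarrow> 'v \<Rightarrow> 'e set \<Rightarrow> 'e set \<Rightarrow> bool" where
  "cut_le V E ends s t C C' \<longleftrightarrow>
     (\<forall>P. st_path V E ends s t P \<longrightarrow> first_pos C P \<le> first_pos C' P)"

definition links :: "'v set \<Rightarrow> 'e set \<Rightarrow> ('e \<Rightarrow> 'v set) \<Rightarrow> 'v \<Rightarrow> 'v \<Rightarrow> ('v,'e) path set \<Rightarrow> bool" where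
  "links V E ends s t \<P> \<longleftrightarrow> st_system V E ends s t \<P> \<and> delta E ends {s} \<subseteq> edges_of \<P>"

definition linkage :: "'v set \<Rightarrow> 'e set \<Rightarrow> ('e \<Rightarrow> 'v set) \<Rightarrow> 'v \<Rightarrow> 'v \<Rightarrow> ('v,'e) path set \<Rightarrow> bool" where
  "linkage V E ends s t \<P> \<longleftrightarrow> links V E ends s t \<P> \<and>
     (\<forall>P\<in>\<P>. set (snd P) \<inter> delta E ends {s} \<noteq> {})"

definition linked :: "'v set \<Rightarrow> 'e set \<Rightarrow> ('e \<Rightarrow> 'v set) \<Rightarrow> 'v \<Rightarrow> 'v \<Rightarrow> bool" where
  "linked V E ends s t \<longleftrightarrow> (\<exists>\<P>. links V E ends s t \<P>)"

end

theory Submission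
  imports Defs "HOL-Library.Transitive_Closure_Table"
begin

text \<open>Let X be the side of C containing s, and QQ an st-system orthogonal to C. Reroute a given
  linkage L: every path of L is followed up to its first C-edge and then continued along the path
  of QQ through that edge. The result is a linking system L' that crosses C only outwards and only
  through first C-edges of paths of L. As every linking system uses e, some path of L' crosses C
  at e. Cutting that path just before e leaves a partial linkage from which no augmenting path
  reaches t, for otherwise a linking system avoiding e would exist. Let Z be the set of vertices of
  X from which t is unreachable in this residual graph. Every edge leaving Z is traversed outwards
  by L', so the cut of Z is an Erdos-Menger cut containing e. Minimality of C forces C to lie in
  this cut and hence in the edges of L'. So every edge of C is the first C-edge of a path of L,
  which makes L orthogonal to C.\<close>

lemma rtranclp_chain:
  assumes "\<And>i. a \<le> i \<Longrightarrow> i < b \<Longrightarrow> r (f i) (f (Suc i))" and "a \<le> b"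
  shows "r\<^sup>*\<^sup>* (f a) (f b)"
  using assms by (induction b) (auto simp: le_Suc_eq intro: rtranclp.rtrancl_into_rtrancl)

lemma rtrancl_path_mono_on:
  assumes "rtrancl_path r x xs y" and "\<And>a b. a \<in> set (x # xs) \<Longrightarrow> r a b \<Longrightarrow> r' a b"
  shows "rtrancl_path r' x xs y"
  using assms by (induction rule: rtrancl_path.induct) (auto intro: rtrancl_path.intros)

lemma st_system_subset: "st_system V E ends s t PP \<Longrightarrow> QQ \<subseteq> PP \<Longrightarrow> st_system V E ends s t QQ"
  unfolding st_system_def by blast

lemma st_system_insert:
  assumes "st_system V E ends s t PP" "st_path V E ends s t P"
    and "\<And>Q. Q \<in> PP \<Longrightarrow> Q \<noteq> P \<Longrightarrow> set (snd P) \<inter> set (snd Q) = {}"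
  shows "st_system V E ends s t (insert P PP)"
  using assms unfolding st_system_def by (metis Int_commute insert_iff)

lemma distinct_hd_notin_drop_Suc: "distinct xs \<Longrightarrow> xs \<noteq> [] \<Longrightarrow> xs ! 0 \<notin> set (drop (Suc i) xs)"
  by (cases xs) (auto dest: in_set_dropD)

section \<open>Darts of paths\<close>

definition darts_on :: "('v,'e) path \<Rightarrow> nat set \<Rightarrow> ('v \<times> 'e \<times> 'v) set" where
  "darts_on P I = (\<lambda>i. (fst P ! i, snd P ! i, fst P ! Suc i)) ` {i \<in> I. i < length (snd P)}"

abbreviation darts :: "('v,'e) path \<Rightarrow> ('v \<times> 'e \<times> 'v) set" where
  "darts P \<equiv> darts_on P UNIV"

definition dart_edges :: "('v \<times> 'e \<times> 'v) set \<Rightarrow> 'e set" where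
  "dart_edges D = (\<lambda>(x,g,y). g) ` D"

definition dart_rel :: "('v \<times> 'e \<times> 'v) set \<Rightarrow> 'v \<Rightarrow> 'v \<Rightarrow> bool" where
  "dart_rel D x y \<longleftrightarrow> (\<exists>g. (x,g,y) \<in> D)"

definition system_darts :: "('v,'e) path set \<Rightarrow> ('v \<times> 'e \<times> 'v) set" where
  "system_darts S = (\<Union>P\<in>S. darts P)"

definition path_prefix :: "('v,'e) path \<Rightarrow> nat \<Rightarrow> ('v,'e) path" where
  "path_prefix P i = (take (Suc i) (fst P), take i (snd P))"

definition path_suffix :: "('v,'e) path \<Rightarrow> nat \<Rightarrow> ('v,'e) path" where
  "path_suffix P i = (drop i (fst P), drop i (snd P))"

lemma mem_darts_on:
  "(x,g,y) \<in> darts_on P I \<longleftrightarrow>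
     (\<exists>i\<in>I. i < length (snd P) \<and> x = fst P ! i \<and> g = snd P ! i \<and> y = fst P ! Suc i)"
  unfolding darts_on_def by auto

lemma darts_on_mono: "I \<subseteq> J \<Longrightarrow> darts_on P I \<subseteq> darts_on P J"
  unfolding darts_on_def by auto

lemma dart_edges_darts_on: "dart_edges (darts_on P I) = (!) (snd P) ` {i \<in> I. i < length (snd P)}"
  unfolding dart_edges_def darts_on_def by (auto simp: image_image)

lemma dart_edges_darts: "dart_edges (darts P) = set (snd P)"
  unfolding dart_edges_darts_on by (auto simp: in_set_conv_nth)

lemma dart_edges_Un: "dart_edges (A \<union> B) = dart_edges A \<union> dart_edges B"
  unfolding dart_edges_def by (rule image_Un)

lemma dart_edges_mono: "A \<subseteq> B \<Longrightarrow> dart_edges A \<subseteq> dart_edges B"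
  unfolding dart_edges_def by (rule image_mono)

lemma mem_dart_edges: "(x,g,y) \<in> D \<Longrightarrow> g \<in> dart_edges D"
  unfolding dart_edges_def by force

lemma darts_Cons: "darts (x # v # vs, g # es) = insert (x,g,v) (darts (v # vs, es))"
  unfolding darts_on_def
  by (simp add: lessThan_def[symmetric] lessThan_Suc_eq_insert_0 image_image)

lemma darts_Nil: "darts (vs, []) = {}"
  unfolding darts_on_def by simp

lemma dart_rel_darts_on:
  assumes "a \<le> b" "b \<le> length (snd P)" "{a..<b} \<subseteq> I"
  shows "(dart_rel (darts_on P I))\<^sup>*\<^sup>* (fst P ! a) (fst P ! b)"
proof (rule rtranclp_chain)
  fix i assume "a \<le> i" "i < b"
  with assms have "(fst P ! i, snd P ! i, fst P ! Suc i) \<in> darts_on P I"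
    unfolding mem_darts_on by (intro bexI[of _ i]) auto
  then show "dart_rel (darts_on P I) (fst P ! i) (fst P ! Suc i)"
    unfolding dart_rel_def by blast
qed (fact assms(1))

lemma dart_rel_mono: "(dart_rel A)\<^sup>*\<^sup>* x y \<Longrightarrow> A \<subseteq> B \<Longrightarrow> (dart_rel B)\<^sup>*\<^sup>* x y"
  by (erule mono_rtranclp[rule_format, rotated]) (auto simp: dart_rel_def)

lemma system_darts_insert: "system_darts (insert P S) = darts P \<union> system_darts S"
  unfolding system_darts_def by simp

lemma dart_edges_system_darts: "dart_edges (system_darts S) = edges_of S"
proof -
  have "dart_edges (system_darts S) = (\<Union>P\<in>S. dart_edges (darts P))"
    unfolding system_darts_def dart_edges_def by blast
  then show ?thesis by (simp add: dart_edges_darts edges_of_def)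
qed

section \<open>Paths and cuts in a grapht\<close>

locale st_graph =
  fixes V :: "'v set" and E :: "'e set" and ends :: "'e \<Rightarrow> 'v set" and s t :: 'v
  assumes grapht: "grapht V E ends s t"
begin

lemma s_in_V: "s \<in> V" and s_ne_t: "s \<noteq> t"
  using grapht unfolding grapht_def by auto

abbreviation path :: "('v,'e) path \<Rightarrow> bool" where
  "path P \<equiv> is_path V E ends P"

lemma edge_ends_obtain:
  assumes "g \<in> E"
  obtains u w where "ends g = {u,w}" "u \<noteq> w" "u \<in> V" "w \<in> V"
  using grapht assms unfolding grapht_def is_graph_def card_2_iff by (metis insert_subset)

lemma ends_in_V: "g \<in> E \<Longrightarrow> ends g = {u,w} \<Longrightarrow> u \<in> V \<and> w \<in> V"
  using grapht unfolding grapht_def is_graph_def by auto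

lemma delta_iff_ends:
  "g \<in> E \<Longrightarrow> ends g = {u,w} \<Longrightarrow> u \<noteq> w \<Longrightarrow> g \<in> delta E ends Z \<longleftrightarrow> (u \<in> Z) \<noteq> (w \<in> Z)"
  unfolding delta_def by (cases "u \<in> Z"; cases "w \<in> Z") (auto simp: Int_insert_left)

lemma delta_complement: "X \<subseteq> V \<Longrightarrow> delta E ends (V - X) = delta E ends X"
proof (rule set_eqI)
  fix g assume X: "X \<subseteq> V"
  show "g \<in> delta E ends (V - X) \<longleftrightarrow> g \<in> delta E ends X"
  proof (cases "g \<in> E")
    case True
    then obtain u w where "ends g = {u,w}" "u \<noteq> w" "u \<in> V" "w \<in> V" by (rule edge_ends_obtain)
    with True X show ?thesis by (auto simp: delta_iff_ends)
  qed (simp add: delta_def)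
qed

lemma mem_delta_singleton: "h \<in> delta E ends {x} \<Longrightarrow> x \<in> ends h"
  unfolding delta_def by (auto simp: Int_insert_right split: if_splits)

lemma path_length: "path P \<Longrightarrow> length (fst P) = Suc (length (snd P))"
  unfolding is_path_def by auto

lemma path_hd: "path P \<Longrightarrow> hd (fst P) = fst P ! 0"
  by (metis hd_conv_nth list.size(3) nat.distinct(1) path_length)

lemma path_last: "path P \<Longrightarrow> last (fst P) = fst P ! length (snd P)"
  by (metis diff_Suc_1 last_conv_nth list.size(3) nat.distinct(1) path_length)

lemma path_vertex_in_V: "path P \<Longrightarrow> i \<le> length (snd P) \<Longrightarrow> fst P ! i \<in> V"
  unfolding is_path_def by (metis le_imp_less_Suc nth_mem subsetD)

lemma path_edge_in_E: "path P \<Longrightarrow> i < length (snd P) \<Longrightarrow> snd P ! i \<in> E"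
  unfolding is_path_def by (metis nth_mem subsetD)

lemma path_edge_ends: "path P \<Longrightarrow> i < length (snd P) \<Longrightarrow> ends (snd P ! i) = {fst P ! i, fst P ! Suc i}"
  unfolding is_path_def by auto

lemma path_vertex_inj:
  "path P \<Longrightarrow> i \<le> length (snd P) \<Longrightarrow> j \<le> length (snd P) \<Longrightarrow> fst P ! i = fst P ! j \<Longrightarrow> i = j"
  unfolding is_path_def by (metis le_imp_less_Suc nth_eq_iff_index_eq)

lemma path_edge_inj:
  "path P \<Longrightarrow> i < length (snd P) \<Longrightarrow> j < length (snd P) \<Longrightarrow> snd P ! i = snd P ! j \<Longrightarrow> i = j"
  unfolding is_path_def by (metis nth_eq_iff_index_eq)

lemma st_path_nth: "st_path V E ends s t P \<Longrightarrow> path P \<and> fst P ! 0 = s \<and> fst P ! length (snd P) = t"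
  unfolding st_path_def using path_hd path_last by metis

lemma path_dart:
  assumes "path P" "(x,g,y) \<in> darts P"
  shows "g \<in> E \<and> ends g = {x,y} \<and> x \<noteq> y \<and> x \<in> V \<and> y \<in> V \<and> g \<in> set (snd P)"
proof -
  from assms(2) obtain i where i: "i < length (snd P)" "x = fst P ! i" "g = snd P ! i" "y = fst P ! Suc i"
    unfolding mem_darts_on by blast
  with path_vertex_inj[OF assms(1), of i "Suc i"] have "x \<noteq> y" by auto
  with i assms(1) show ?thesis by (auto simp: path_edge_in_E path_edge_ends path_vertex_in_V)
qed

lemma path_dart_vertices: "path P \<Longrightarrow> (x,g,y) \<in> darts P \<Longrightarrow> x \<in> set (fst P) \<and> y \<in> set (fst P)"
  unfolding mem_darts_on by (metis nth_mem path_length Suc_mono less_SucI)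

lemma path_edge_dart: "g \<in> set (snd P) \<Longrightarrow> \<exists>x y. (x,g,y) \<in> darts P"
  unfolding mem_darts_on by (metis in_set_conv_nth UNIV_I)

lemma path_dart_unique: "path P \<Longrightarrow> (x,g,y) \<in> darts P \<Longrightarrow> (x',g,y') \<in> darts P \<Longrightarrow> x = x' \<and> y = y'"
  unfolding mem_darts_on by (metis path_edge_inj)

lemma path_dart_not_into_hd:
  assumes "path P" "(x,g,y) \<in> darts P"
  shows "y \<noteq> hd (fst P)"
proof -
  from assms(2) obtain i where "i < length (snd P)" "y = fst P ! Suc i"
    unfolding mem_darts_on by blast
  with path_vertex_inj[OF assms(1), of "Suc i" 0] show ?thesis by (auto simp: path_hd[OF assms(1)])
qed

lemma path_dart_from_hd:
  assumes "path P" "(hd (fst P),g,y) \<in> darts P"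
  shows "g = snd P ! 0"
proof -
  from assms(2) obtain i where "i < length (snd P)" "hd (fst P) = fst P ! i" "g = snd P ! i"
    unfolding mem_darts_on by blast
  with path_vertex_inj[OF assms(1), of 0 i] show ?thesis by (auto simp: path_hd[OF assms(1)])
qed

lemma path_delta_hd_first:
  assumes "path P" "h \<in> delta E ends {hd (fst P)}" "h \<in> set (snd P)"
  shows "h = snd P ! 0"
proof -
  obtain x y where d: "(x,h,y) \<in> darts P" using path_edge_dart[OF assms(3)] by blast
  with assms(1) have "ends h = {x,y}" "y \<noteq> hd (fst P)"
    using path_dart path_dart_not_into_hd by blast+
  with mem_delta_singleton[OF assms(2)] have "x = hd (fst P)" by auto
  with d show ?thesis using path_dart_from_hd[OF assms(1)] by simp
qed

lemma delta_s_covered_by_first_edges: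
  assumes "delta E ends {s} \<subseteq> edges_of S" and "\<And>P. P \<in> S \<Longrightarrow> path P \<and> hd (fst P) = s"
    and "\<And>P. P \<in> S \<Longrightarrow> P \<notin> S' \<Longrightarrow> snd P \<noteq> [] \<Longrightarrow> snd P ! 0 \<in> edges_of S'"
  shows "delta E ends {s} \<subseteq> edges_of S'"
proof
  fix h assume h: "h \<in> delta E ends {s}"
  with assms(1) obtain P where P: "P \<in> S" "h \<in> set (snd P)" unfolding edges_of_def by blast
  show "h \<in> edges_of S'"
  proof (cases "P \<in> S'")
    case False
    from assms(2) P h have "h = snd P ! 0" using path_delta_hd_first by blast
    moreover have "snd P \<noteq> []" using P(2) by auto
    ultimately show ?thesis using assms(3)[OF P(1) False] by simp
  qed (use P in \<open>auto simp: edges_of_def\<close>)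
qed

definition consistent_darts :: "('v \<times> 'e \<times> 'v) set \<Rightarrow> bool" where
  "consistent_darts D \<longleftrightarrow>
     (\<forall>x g y. (x,g,y) \<in> D \<longrightarrow> g \<in> E \<and> ends g = {x,y} \<and> x \<in> V \<and> y \<in> V) \<and>
     (\<forall>x g y x' y'. (x,g,y) \<in> D \<longrightarrow> (x',g,y') \<in> D \<longrightarrow> x = x' \<and> y = y')"

lemma consistent_darts_path: "path P \<Longrightarrow> consistent_darts (darts P)"
  unfolding consistent_darts_def using path_dart path_dart_unique by meson

lemma consistent_darts_Un:
  "consistent_darts A \<Longrightarrow> consistent_darts B \<Longrightarrow> dart_edges A \<inter> dart_edges B = {} \<Longrightarrow>
     consistent_darts (A \<union> B)"
  unfolding consistent_darts_def by (auto dest: mem_dart_edges)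

lemma path_within_darts:
  assumes D: "consistent_darts D" and "x \<in> V" and "(dart_rel D)\<^sup>*\<^sup>* x y"
  obtains P where "path P" "hd (fst P) = x" "last (fst P) = y" "darts P \<subseteq> D"
proof -
  have "\<exists>es. path (x # xs, es) \<and> last (x # xs) = y \<and> darts (x # xs, es) \<subseteq> D"
    if "distinct (x # xs)" "rtrancl_path (dart_rel D) x xs y" "x \<in> V" for xs x
    using that
  proof (induction xs arbitrary: x)
    case Nil
    then have "x = y" by (auto elim: rtrancl_path.cases)
    with Nil show ?case unfolding is_path_def by (auto simp: darts_Nil)
  next
    case (Cons z zs)
    from Cons.prems(2) have "dart_rel D x z" and rest: "rtrancl_path (dart_rel D) z zs y"
      by (auto elim: rtrancl_path.cases)
    then obtain g where g: "(x,g,z) \<in> D" unfolding dart_rel_def by blast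
    with D have gE: "g \<in> E" "ends g = {x,z}" "z \<in> V" unfolding consistent_darts_def by blast+
    from Cons.IH[of z] Cons.prems rest gE obtain es where
      es: "path (z # zs, es)" "last (z # zs) = y" "darts (z # zs, es) \<subseteq> D" by auto
    have "g \<notin> set es"
    proof
      assume "g \<in> set es"
      then obtain a b where ab: "(a,g,b) \<in> darts (z # zs, es)" using path_edge_dart by fastforce
      then obtain i where "i < length es" "a = (z # zs) ! i" unfolding mem_darts_on by auto
      with path_length[OF es(1)] have "a \<in> set (z # zs)" by (metis fst_conv snd_conv less_SucI nth_mem)
      moreover have "a = x" using D g ab es(3) unfolding consistent_darts_def by blast
      ultimately show False using Cons.prems(1) by simp
    qed
    with es(1) Cons.prems gE have "path (x # z # zs, g # es)"
      unfolding is_path_def by (auto simp: less_Suc_eq_0_disj)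
    moreover have "darts (x # z # zs, g # es) \<subseteq> D" using g es(3) by (simp add: darts_Cons)
    ultimately show ?case using es(2) by auto
  qed
  moreover obtain xs where "rtrancl_path (dart_rel D) x xs y" "distinct (x # xs)"
    using assms(3) rtrancl_path_distinct unfolding rtranclp_eq_rtrancl_path by metis
  ultimately obtain es where "path (x # xs, es)" "last (x # xs) = y" "darts (x # xs, es) \<subseteq> D"
    using assms(2) by blast
  then show thesis by (intro that[of "(x # xs, es)"]) auto
qed

lemma dart_rel_path: "path P \<Longrightarrow> darts P \<subseteq> D \<Longrightarrow> (dart_rel D)\<^sup>*\<^sup>* (hd (fst P)) (last (fst P))"
  using dart_rel_darts_on[of 0 "length (snd P)" P UNIV] dart_rel_mono
  by (simp add: path_hd path_last)

lemma path_first_edge: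
  assumes "path P" "last (fst P) \<noteq> hd (fst P)" "darts P \<subseteq> D"
    and "\<And>g y. (hd (fst P),g,y) \<in> D \<Longrightarrow> g = h"
  shows "h \<in> set (snd P)"
proof -
  have "snd P \<noteq> []" using assms(1,2) by (metis list.size(3) path_hd path_last)
  then have "(fst P ! 0, snd P ! 0, fst P ! Suc 0) \<in> darts P" unfolding mem_darts_on by auto
  with assms have "snd P ! 0 = h" by (auto simp: path_hd)
  with \<open>snd P \<noteq> []\<close> show ?thesis by auto
qed

lemma path_edge_in_delta_iff:
  assumes "path P" "i < length (snd P)"
  shows "snd P ! i \<in> delta E ends Z \<longleftrightarrow> (fst P ! i \<in> Z) \<noteq> (fst P ! Suc i \<in> Z)"
proof -
  have "fst P ! i \<noteq> fst P ! Suc i" using path_vertex_inj[OF assms(1), of i "Suc i"] assms(2) by auto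
  then show ?thesis using delta_iff_ends[OF path_edge_in_E[OF assms] path_edge_ends[OF assms]] by blast
qed

lemma path_same_side:
  assumes P: "path P" and "a \<le> b" "b \<le> length (snd P)"
    and "\<And>k. a \<le> k \<Longrightarrow> k < b \<Longrightarrow> snd P ! k \<notin> delta E ends Z"
  shows "fst P ! a \<in> Z \<longleftrightarrow> fst P ! b \<in> Z"
  using assms(2-)
proof (induction b)
  case (Suc b)
  show ?case
  proof (cases "a = Suc b")
    case False
    with Suc have "fst P ! a \<in> Z \<longleftrightarrow> fst P ! b \<in> Z" "b < length (snd P)"
      "snd P ! b \<notin> delta E ends Z" by auto
    then show ?thesis by (simp add: path_edge_in_delta_iff[OF P])
  qed simp
qed simp

lemma path_exit_edge:
  assumes P: "path P" and "k \<le> length (snd P)" "fst P ! 0 \<in> Z" "fst P ! k \<notin> Z"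
  shows "\<exists>i<k. fst P ! i \<in> Z \<and> fst P ! Suc i \<notin> Z \<and> snd P ! i \<in> delta E ends Z"
  using assms(2-)
proof (induction k)
  case (Suc k)
  show ?case
  proof (cases "fst P ! k \<in> Z")
    case True
    have "k < length (snd P)" using Suc by auto
    with True Suc.prems(3) show ?thesis
      by (intro exI[of _ k]) (simp add: path_edge_in_delta_iff[OF P])
  next
    case False
    with Suc obtain i where "i < k" "fst P ! i \<in> Z \<and> fst P ! Suc i \<notin> Z \<and> snd P ! i \<in> delta E ends Z"
      by auto
    then show ?thesis by (intro exI[of _ i]) simp
  qed
qed simp

lemma path_meets_delta:
  assumes "path P" "hd (fst P) \<in> Z" "last (fst P) \<notin> Z"
  shows "\<exists>i<length (snd P). fst P ! i \<in> Z \<and> fst P ! Suc i \<notin> Z \<and> snd P ! i \<in> delta E ends Z"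
  using path_exit_edge[OF assms(1), of "length (snd P)" Z] assms by (simp add: path_hd path_last)

lemma first_pos_crossing:
  assumes P: "path P" and "hd (fst P) \<in> X" "last (fst P) \<notin> X"
  defines "j \<equiv> first_pos (delta E ends X) P"
  shows "j < length (snd P)" "snd P ! j \<in> delta E ends X"
    "\<And>k. k < j \<Longrightarrow> snd P ! k \<notin> delta E ends X"
    "\<And>k. k \<le> j \<Longrightarrow> fst P ! k \<in> X" "fst P ! Suc j \<notin> X"
proof -
  obtain i where "i < length (snd P)" "snd P ! i \<in> delta E ends X"
    using path_meets_delta[OF assms(1-3)] by blast
  then show j: "j < length (snd P)" "snd P ! j \<in> delta E ends X"
    unfolding j_def first_pos_def by (metis (mono_tags, lifting) LeastI)+
  show before: "snd P ! k \<notin> delta E ends X" if "k < j" for k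
    using not_less_Least[of k] that j(1) unfolding j_def first_pos_def by fastforce
  show inside: "fst P ! k \<in> X" if "k \<le> j" for k
    using path_same_side[OF P, of 0 k X] that j before assms(2) by (simp add: path_hd[OF P])
  show "fst P ! Suc j \<notin> X"
    using j inside[of j] by (simp add: path_edge_in_delta_iff[OF P])
qed

lemma first_pos_unique_crossing:
  assumes P: "path P" and "fst P ! 0 \<in> X" and "card (delta E ends X \<inter> set (snd P)) = 1"
  defines "j \<equiv> first_pos (delta E ends X) P"
  shows "j < length (snd P)" "\<And>k. k < length (snd P) \<Longrightarrow> snd P ! k \<in> delta E ends X \<longleftrightarrow> k = j"
    "\<And>k. k \<le> length (snd P) \<Longrightarrow> fst P ! k \<in> X \<longleftrightarrow> k \<le> j"
proof -
  obtain g where g: "delta E ends X \<inter> set (snd P) = {g}" using assms(3) card_1_singletonE by blast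
  then have "g \<in> set (snd P)" by blast
  then obtain i where i: "i < length (snd P)" "snd P ! i = g" by (auto simp: in_set_conv_nth)
  have only_i: "snd P ! k \<in> delta E ends X \<longleftrightarrow> k = i" if k: "k < length (snd P)" for k
  proof
    assume "snd P ! k \<in> delta E ends X"
    with k have "snd P ! k \<in> delta E ends X \<inter> set (snd P)" by simp
    with g have "snd P ! k = g" by blast
    with i show "k = i" using path_edge_inj[OF P k i(1)] by simp
  next
    assume "k = i"
    with g i show "snd P ! k \<in> delta E ends X" by blast
  qed
  have "j = i" unfolding j_def first_pos_def
  proof (rule Least_equality)
    show "i < length (snd P) \<and> snd P ! i \<in> delta E ends X" using i(1) only_i by blast
  next
    fix y assume "y < length (snd P) \<and> snd P ! y \<in> delta E ends X"
    then have "y = i" using only_i by blast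
    then show "i \<le> y" by simp
  qed
  with i(1) only_i show "j < length (snd P)" "\<And>k. k < length (snd P) \<Longrightarrow> snd P ! k \<in> delta E ends X \<longleftrightarrow> k = j"
    by simp_all
  have upto: "fst P ! k \<in> X" if "k \<le> i" for k
  proof -
    have "fst P ! 0 \<in> X \<longleftrightarrow> fst P ! k \<in> X"
      by (rule path_same_side[OF P]) (use that i(1) only_i in auto)
    with assms(2) show ?thesis by blast
  qed
  have "fst P ! Suc i \<notin> X"
    using upto[of i] only_i[OF i(1)] path_edge_in_delta_iff[OF P i(1), of X] by blast
  moreover have "fst P ! Suc i \<in> X \<longleftrightarrow> fst P ! k \<in> X" if "i < k" "k \<le> length (snd P)" for k
    by (rule path_same_side[OF P]) (use that only_i in auto)
  ultimately have beyond: "fst P ! k \<notin> X" if "i < k" "k \<le> length (snd P)" for k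
    using that by simp
  show "fst P ! k \<in> X \<longleftrightarrow> k \<le> j" if "k \<le> length (snd P)" for k
    using that upto beyond[of k] \<open>j = i\<close> by (cases "k \<le> i") auto
qed

lemma path_crosses_once:
  assumes P: "path P" and "hd (fst P) \<in> Z" "last (fst P) \<notin> Z"
    and leaving: "\<And>x g y. (x,g,y) \<in> darts P \<Longrightarrow> g \<in> delta E ends Z \<Longrightarrow> x \<in> Z"
  shows "card (delta E ends Z \<inter> set (snd P)) = 1"
proof -
  define j where "j = first_pos (delta E ends Z) P"
  note first = first_pos_crossing[OF assms(1-3), folded j_def]
  have outside: "fst P ! k \<notin> Z" if "j < k" "k \<le> length (snd P)" for k
    using that
  proof (induction k)
    case (Suc k)
    then have k: "k < length (snd P)" by simp
    show ?case
    proof (cases "j = k")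
      case False
      with Suc have out: "fst P ! k \<notin> Z" by simp
      show ?thesis
      proof
        assume "fst P ! Suc k \<in> Z"
        with out have "snd P ! k \<in> delta E ends Z" using path_edge_in_delta_iff[OF P k] by simp
        with k leaving[of "fst P ! k" "snd P ! k" "fst P ! Suc k"] have "fst P ! k \<in> Z"
          unfolding mem_darts_on by blast
        with out show False by blast
      qed
    qed (use first(5) in simp)
  qed simp
  have "delta E ends Z \<inter> set (snd P) = {snd P ! j}"
  proof (intro equalityI subsetI)
    fix g assume "g \<in> delta E ends Z \<inter> set (snd P)"
    then obtain k where k: "k < length (snd P)" "g = snd P ! k" "g \<in> delta E ends Z"
      by (auto simp: in_set_conv_nth)
    then have "fst P ! k \<in> Z" using leaving unfolding mem_darts_on by blast
    with k first(3) outside[of k] have "\<not> k < j" "\<not> j < k" by auto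
    then have "k = j" by simp
    with k show "g \<in> {snd P ! j}" by simp
  qed (use first in auto)
  then show ?thesis by simp
qed

lemma path_prefix_path:
  assumes "path P" "i \<le> length (snd P)"
  shows "path (path_prefix P i)"
  using assms unfolding is_path_def path_prefix_def
  by (auto simp: min_def dest: in_set_takeD)

lemma hd_path_prefix: "path P \<Longrightarrow> hd (fst (path_prefix P i)) = hd (fst P)"
  unfolding path_prefix_def by (simp add: path_hd hd_conv_nth path_length)

lemma last_path_prefix:
  assumes "path P" "i \<le> length (snd P)"
  shows "last (fst (path_prefix P i)) = fst P ! i"
proof -
  have "i < length (fst P)" using path_length[OF assms(1)] assms(2) by simp
  then show ?thesis unfolding path_prefix_def by (simp add: take_Suc_conv_app_nth)
qed

lemma darts_path_prefix: "i \<le> length (snd P) \<Longrightarrow> darts (path_prefix P i) = darts_on P {..<i}"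
  unfolding path_prefix_def darts_on_def by (auto simp: min_def)

lemma first_edge_in_path_prefix: "0 < i \<Longrightarrow> snd P \<noteq> [] \<Longrightarrow> snd P ! 0 \<in> set (snd (path_prefix P i))"
  unfolding path_prefix_def by (simp add: in_set_conv_nth) (metis length_greater_0_conv nth_take)

lemma path_suffix_path:
  assumes "path P" "i \<le> length (snd P)"
  shows "path (path_suffix P i)"
  using assms unfolding is_path_def path_suffix_def
  by (auto simp: add.commute[of _ i] dest: in_set_dropD)

lemma hd_path_suffix: "path P \<Longrightarrow> i \<le> length (snd P) \<Longrightarrow> hd (fst (path_suffix P i)) = fst P ! i"
  unfolding path_suffix_def by (simp add: hd_drop_conv_nth path_length)

lemma last_path_suffix: "path P \<Longrightarrow> i \<le> length (snd P) \<Longrightarrow> last (fst (path_suffix P i)) = last (fst P)"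
  unfolding path_suffix_def by (simp add: path_length)

lemma darts_path_suffix:
  assumes "path P"
  shows "darts (path_suffix P i) = darts_on P {i..}"
proof (rule set_eqI, clarify)
  fix x g y
  have len: "length (fst P) = Suc (length (snd P))" by (rule path_length[OF assms])
  show "(x,g,y) \<in> darts (path_suffix P i) \<longleftrightarrow> (x,g,y) \<in> darts_on P {i..}"
  proof
    assume "(x,g,y) \<in> darts (path_suffix P i)"
    then obtain j where "j < length (snd P) - i" "x = fst P ! (i + j)" "g = snd P ! (i + j)"
      "y = fst P ! Suc (i + j)"
      unfolding mem_darts_on path_suffix_def using len by auto
    then show "(x,g,y) \<in> darts_on P {i..}" unfolding mem_darts_on by (intro bexI[of _ "i + j"]) auto
  next
    assume "(x,g,y) \<in> darts_on P {i..}"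
    then obtain m where "i \<le> m" "m < length (snd P)" "x = fst P ! m" "g = snd P ! m" "y = fst P ! Suc m"
      unfolding mem_darts_on by auto
    then show "(x,g,y) \<in> darts (path_suffix P i)"
      unfolding mem_darts_on path_suffix_def using len by (intro bexI[of _ "m - i"]) auto
  qed
qed

lemma path_join:
  assumes A: "path A" and B: "path B" and meet: "last (fst A) = hd (fst B)"
    and disj: "set (snd A) \<inter> set (snd B) = {}"
  obtains R where "path R" "hd (fst R) = hd (fst A)" "last (fst R) = last (fst B)"
    "darts R \<subseteq> darts A \<union> darts B"
    "hd (fst A) \<notin> set (fst B) \<Longrightarrow> snd A \<noteq> [] \<Longrightarrow> snd A ! 0 \<in> set (snd R)"
proof -
  let ?D = "darts A \<union> darts B"
  have "consistent_darts ?D"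
    using consistent_darts_Un consistent_darts_path[OF A] consistent_darts_path[OF B] disj
    by (simp add: dart_edges_darts)
  moreover have "hd (fst A) \<in> V"
    using path_vertex_in_V[OF A, of 0] by (simp add: path_hd[OF A])
  moreover have "(dart_rel ?D)\<^sup>*\<^sup>* (hd (fst A)) (last (fst B))"
    using dart_rel_mono[OF dart_rel_path[OF A order_refl]] dart_rel_mono[OF dart_rel_path[OF B order_refl]]
      meet by (metis Un_upper1 Un_upper2 rtranclp_trans)
  ultimately obtain R where R: "path R" "hd (fst R) = hd (fst A)" "last (fst R) = last (fst B)" "darts R \<subseteq> ?D"
    by (rule path_within_darts)
  moreover have "snd A ! 0 \<in> set (snd R)" if "hd (fst A) \<notin> set (fst B)" "snd A \<noteq> []"
  proof (rule path_first_edge[OF R(1) _ R(4)])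
    have "last (fst B) \<in> set (fst B)" using path_length[OF B] by (metis last_in_set list.size(3) nat.distinct(1))
    with that(1) R(2,3) show "last (fst R) \<noteq> hd (fst R)" by auto
    fix g y assume "(hd (fst R), g, y) \<in> ?D"
    with R(2) have "(hd (fst A), g, y) \<in> darts A \<union> darts B" by simp
    with that(1) show "g = snd A ! 0"
      using path_dart_from_hd[OF A] path_dart_vertices[OF B] by blast
  qed
  ultimately show thesis by (rule that)
qed

lemma path_join_suffix:
  assumes R: "path R" "last (fst R) \<noteq> hd (fst R)" and P: "path P"
    and i: "i < length (snd P)" "fst P ! Suc i = last (fst R)" "hd (fst R) \<notin> set (drop (Suc i) (fst P))"
    and disj: "set (snd R) \<inter> set (drop (Suc i) (snd P)) = {}"
  obtains Pn where "path Pn" "hd (fst Pn) = hd (fst R)" "last (fst Pn) = last (fst P)"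
    "darts Pn \<subseteq> darts R \<union> darts_on P {Suc i..}"
    "set (snd Pn) \<subseteq> set (snd R) \<union> set (drop (Suc i) (snd P))" "snd R ! 0 \<in> set (snd Pn)"
proof -
  define B where "B = path_suffix P (Suc i)"
  have B: "path B" "last (fst R) = hd (fst B)" "last (fst B) = last (fst P)" "darts B = darts_on P {Suc i..}"
    "set (fst B) = set (drop (Suc i) (fst P))" "set (snd B) = set (drop (Suc i) (snd P))"
    using path_suffix_path[OF P] hd_path_suffix[OF P] last_path_suffix[OF P] darts_path_suffix[OF P] i(1,2)
    unfolding B_def by (auto simp: path_suffix_def)
  have "snd R \<noteq> []" using R by (metis list.size(3) path_hd path_last)
  obtain Pn where Pn: "path Pn" "hd (fst Pn) = hd (fst R)" "last (fst Pn) = last (fst B)"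
      "darts Pn \<subseteq> darts R \<union> darts B"
    and first: "hd (fst R) \<notin> set (fst B) \<Longrightarrow> snd R \<noteq> [] \<Longrightarrow> snd R ! 0 \<in> set (snd Pn)"
    by (rule path_join[OF R(1) B(1,2)]) (use disj B(6) in simp_all)
  have "set (snd Pn) \<subseteq> set (snd R) \<union> set (drop (Suc i) (snd P))"
    using dart_edges_mono[OF Pn(4)] unfolding dart_edges_Un dart_edges_darts B(6) .
  with Pn first B(3,4,5) i(3) \<open>snd R \<noteq> []\<close> show thesis by (intro that) auto
qed

section \<open>Augmenting paths\<close>

text \<open>Arcs into s are left out, so that
  a path grown from s by augmentation never returns to s.\<close>

definition residual :: "('v,'e) path set \<Rightarrow> 'e \<Rightarrow> 'v \<Rightarrow> 'v \<Rightarrow> bool" where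
  "residual S e u w \<longleftrightarrow> (\<exists>g\<in>E. g \<noteq> e \<and> ends g = {u,w} \<and> (u,g,w) \<notin> system_darts S \<and> w \<noteq> s)"

text \<open>The state of the augmenting-path argument: an st-system PP and a path R from s that is still
  being extended towards t, jointly avoiding e and covering the edges at s.\<close>

definition partial_linkage :: "'e \<Rightarrow> ('v,'e) path set \<Rightarrow> ('v,'e) path \<Rightarrow> bool" where
  "partial_linkage e PP R \<longleftrightarrow> st_system V E ends s t PP \<and> path R \<and> hd (fst R) = s \<and> last (fst R) \<noteq> s \<and>
     (\<forall>P\<in>PP. set (snd P) \<inter> set (snd R) = {}) \<and> e \<notin> edges_of (insert R PP) \<and>
     delta E ends {s} \<subseteq> edges_of (insert R PP)"

lemma partial_linkage_paths: "partial_linkage e PP R \<Longrightarrow> P \<in> insert R PP \<Longrightarrow> path P \<and> hd (fst P) = s"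
  unfolding partial_linkage_def st_system_def st_path_def by auto

lemma residual_mono:
  "residual S e a b \<Longrightarrow> system_darts S' \<subseteq> system_darts S \<union> {d. fst d = w} \<Longrightarrow> a \<noteq> w \<Longrightarrow> residual S' e a b"
  unfolding residual_def by fastforce

lemma links_of_partial_linkage:
  assumes "partial_linkage e PP R" "last (fst R) = t"
  shows "links V E ends s t (insert R PP) \<and> e \<notin> edges_of (insert R PP)"
proof -
  from assms have "st_path V E ends s t R"
    unfolding partial_linkage_def st_path_def by blast
  with assms(1) have "st_system V E ends s t (insert R PP)"
    unfolding partial_linkage_def by (intro st_system_insert) (auto simp: Int_commute)
  with assms(1) show ?thesis unfolding partial_linkage_def links_def by blast
qed

lemma partial_linkage_extend:
  assumes PL: "partial_linkage e PP R"
    and g: "g \<in> E" "g \<noteq> e" "ends g = {last (fst R), w}" "w \<noteq> s"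
    and fresh: "g \<notin> edges_of (insert R PP)"
  obtains R' where "partial_linkage e PP R'" "last (fst R') = w"
    "system_darts (insert R' PP) \<subseteq> insert (last (fst R), g, w) (system_darts (insert R PP))"
proof -
  from PL have R: "path R" "hd (fst R) = s" "last (fst R) \<noteq> s"
    and disjR: "\<forall>P\<in>PP. set (snd P) \<inter> set (snd R) = {}"
    and avoid: "e \<notin> edges_of (insert R PP)" and cover: "delta E ends {s} \<subseteq> edges_of (insert R PP)"
    unfolding partial_linkage_def by auto
  define G where "G = ([last (fst R), w], [g])"
  have G: "path G" "darts G = {(last (fst R), g, w)}"
    using g ends_in_V[OF g(1,3)] edge_ends_obtain[OF g(1)]
    unfolding G_def is_path_def darts_on_def by (auto simp: doubleton_eq_iff)
  have disj: "set (snd R) \<inter> set (snd G) = {}" using fresh unfolding G_def edges_of_def by auto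
  obtain R' where R': "path R'" "hd (fst R') = hd (fst R)" "last (fst R') = last (fst G)"
      "darts R' \<subseteq> darts R \<union> darts G"
    and first: "hd (fst R) \<notin> set (fst G) \<Longrightarrow> snd R \<noteq> [] \<Longrightarrow> snd R ! 0 \<in> set (snd R')"
    by (rule path_join[OF R(1) G(1) _ disj]) (simp_all add: G_def)
  have "snd R \<noteq> []" using R by (metis list.size(3) path_hd path_last)
  with first R g(4) have first: "snd R ! 0 \<in> set (snd R')" by (simp add: G_def)
  from R' R(2) have R': "path R'" "hd (fst R') = s" "last (fst R') = w" "darts R' \<subseteq> darts R \<union> darts G"
    by (simp_all add: G_def)
  have edges: "set (snd R') \<subseteq> insert g (set (snd R))"
    using dart_edges_mono[OF R'(4)] unfolding dart_edges_Un dart_edges_darts by (simp add: G_def)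
  have "partial_linkage e PP R'"
    unfolding partial_linkage_def
  proof (intro conjI)
    have "g \<notin> set (snd P)" if "P \<in> PP" for P using fresh that unfolding edges_of_def by blast
    with disjR edges show "\<forall>P\<in>PP. set (snd P) \<inter> set (snd R') = {}" by blast
    from avoid edges g(2) show "e \<notin> edges_of (insert R' PP)" unfolding edges_of_def by blast
    show "delta E ends {s} \<subseteq> edges_of (insert R' PP)"
    proof (rule delta_s_covered_by_first_edges[OF cover partial_linkage_paths[OF PL]])
      fix P assume "P \<in> insert R PP" "P \<notin> insert R' PP"
      with first show "snd P ! 0 \<in> edges_of (insert R' PP)" unfolding edges_of_def by auto
    qed
  qed (use PL R' g(4) in \<open>simp_all add: partial_linkage_def\<close>)
  moreover have "system_darts (insert R' PP) \<subseteq> insert (last (fst R), g, w) (system_darts (insert R PP))"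
    using R'(4) G(2) by (auto simp: system_darts_insert)
  ultimately show thesis using R'(3) that by blast
qed

lemma partial_linkage_retract:
  assumes PL: "partial_linkage e PP R" and i: "i \<le> length (snd R)" "fst R ! i \<noteq> s"
  shows "partial_linkage e PP (path_prefix R i)"
proof -
  from PL have R: "path R" "hd (fst R) = s"
    and disjR: "\<forall>P\<in>PP. set (snd P) \<inter> set (snd R) = {}"
    and avoid: "e \<notin> edges_of (insert R PP)" and cover: "delta E ends {s} \<subseteq> edges_of (insert R PP)"
    unfolding partial_linkage_def by auto
  define R' where "R' = path_prefix R i"
  have R': "path R'" "hd (fst R') = s" "last (fst R') \<noteq> s"
    using path_prefix_path[OF R(1) i(1)] hd_path_prefix[OF R(1)] last_path_prefix[OF R(1) i(1)] R(2) i(2)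
    unfolding R'_def by auto
  have edges: "set (snd R') \<subseteq> set (snd R)" unfolding R'_def path_prefix_def by (simp add: set_take_subset)
  have "0 < i" using i(2) R(2) by (metis gr0I path_hd[OF R(1)])
  moreover from this i(1) have "snd R \<noteq> []" by auto
  ultimately have first: "snd R ! 0 \<in> set (snd R')"
    unfolding R'_def by (rule first_edge_in_path_prefix)
  have "delta E ends {s} \<subseteq> edges_of (insert R' PP)"
  proof (rule delta_s_covered_by_first_edges[OF cover partial_linkage_paths[OF PL]])
    fix P assume "P \<in> insert R PP" "P \<notin> insert R' PP"
    with first show "snd P ! 0 \<in> edges_of (insert R' PP)" unfolding edges_of_def by auto
  qed
  moreover have "\<forall>P\<in>PP. set (snd P) \<inter> set (snd R') = {}" using disjR edges by blast
  moreover have "e \<notin> edges_of (insert R' PP)" using avoid edges unfolding edges_of_def by blast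
  ultimately show ?thesis using PL R' unfolding partial_linkage_def R'_def by blast
qed

lemma partial_linkage_swap:
  assumes PL: "partial_linkage e PP R" and P: "P \<in> PP"
    and i: "i < length (snd P)" "fst P ! i \<noteq> s" "fst P ! Suc i = last (fst R)"
  obtains Pn where "partial_linkage e (insert Pn (PP - {P})) (path_prefix P i)"
    "darts Pn \<subseteq> darts R \<union> darts P"
proof -
  from PL have sys: "st_system V E ends s t PP" and R: "path R" "hd (fst R) = s" "last (fst R) \<noteq> s"
    and disjR: "\<forall>Q\<in>PP. set (snd Q) \<inter> set (snd R) = {}"
    and avoid: "e \<notin> edges_of (insert R PP)" and cover: "delta E ends {s} \<subseteq> edges_of (insert R PP)"
    unfolding partial_linkage_def by auto
  have disjP: "set (snd Q) \<inter> set (snd P) = {}" if "Q \<in> PP" "Q \<noteq> P" for Q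
    using sys P that unfolding st_system_def by blast
  from sys P have "st_path V E ends s t P" unfolding st_system_def by blast
  then have Pp: "path P" "fst P ! 0 = s" "last (fst P) = t" by (simp_all add: st_path_nth st_path_def)
  have "fst P \<noteq> []" "distinct (fst P)" using Pp(1) unfolding is_path_def by auto
  then have "s \<notin> set (drop (Suc i) (fst P))" using distinct_hd_notin_drop_Suc Pp(2) by auto
  moreover have "set (snd R) \<inter> set (drop (Suc i) (snd P)) = {}"
    using disjR P by (auto dest: in_set_dropD)
  ultimately obtain Pn where Pn: "st_path V E ends s t Pn" "darts Pn \<subseteq> darts R \<union> darts_on P {Suc i..}"
      "set (snd Pn) \<subseteq> set (snd R) \<union> set (drop (Suc i) (snd P))" "snd R ! 0 \<in> set (snd Pn)"
    using path_join_suffix[OF R(1) _ Pp(1) i(1,3)] R(2,3) Pp(3) unfolding st_path_def by (metis (no_types))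
  define R' where "R' = path_prefix P i"
  have R': "path R'" "hd (fst R') = s" "last (fst R') \<noteq> s" "set (snd R') = set (take i (snd P))"
    using path_prefix_path[OF Pp(1)] hd_path_prefix[OF Pp(1)] last_path_prefix[OF Pp(1)] i Pp(2)
    by (simp_all add: R'_def path_prefix_def path_hd[OF Pp(1)])
  have "0 < i" using i(2) Pp(2) by (metis gr0I)
  then have first: "snd P ! 0 \<in> set (snd R')" unfolding R'_def using i(1) by (intro first_edge_in_path_prefix) auto
  have R'_sub: "set (snd R') \<subseteq> set (snd P)" using R'(4) set_take_subset by metis
  have "set (take i (snd P)) \<inter> set (drop (Suc i) (snd P)) = {}"
    using Pp(1) unfolding is_path_def by (simp add: set_take_disj_set_drop_if_distinct)
  with Pn(3) R'(4) R'_sub disjR P have Pn_R': "set (snd Pn) \<inter> set (snd R') = {}" by blast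
  have "st_system V E ends s t (insert Pn (PP - {P}))"
  proof (rule st_system_insert)
    show "st_system V E ends s t (PP - {P})" using sys by (rule st_system_subset) blast
    show "set (snd Pn) \<inter> set (snd Q) = {}" if "Q \<in> PP - {P}" "Q \<noteq> Pn" for Q
      using Pn(3) disjR disjP[of Q] that set_drop_subset[of "Suc i" "snd P"] by blast
  qed (fact Pn(1))
  moreover have "\<forall>Q\<in>insert Pn (PP - {P}). set (snd Q) \<inter> set (snd R') = {}"
    using Pn_R' disjP R'_sub by blast
  moreover have "e \<notin> edges_of (insert R' (insert Pn (PP - {P})))"
    using avoid Pn(3) R'(4) P unfolding edges_of_def by (auto dest: in_set_takeD in_set_dropD)
  moreover have "delta E ends {s} \<subseteq> edges_of (insert R' (insert Pn (PP - {P})))"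
  proof (rule delta_s_covered_by_first_edges[OF cover partial_linkage_paths[OF PL]])
    fix Q assume "Q \<in> insert R PP" "Q \<notin> insert R' (insert Pn (PP - {P}))"
    with Pn(4) first show "snd Q ! 0 \<in> edges_of (insert R' (insert Pn (PP - {P})))"
      unfolding edges_of_def by auto
  qed
  ultimately have "partial_linkage e (insert Pn (PP - {P})) R'"
    using R' unfolding partial_linkage_def by blast
  moreover have "darts Pn \<subseteq> darts R \<union> darts P" using Pn(2) darts_on_mono[of "{Suc i..}" UNIV P] by blast
  ultimately show thesis using that unfolding R'_def by blast
qed

lemma unused_edge_traversed_backwards:
  assumes Q: "Q \<in> S" "path Q" "g \<in> set (snd Q)" and g: "ends g = {u,w}" "(u,g,w) \<notin> system_darts S"
  shows "\<exists>i<length (snd Q). fst Q ! i = w \<and> fst Q ! Suc i = u"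
proof -
  obtain x y where xy: "(x,g,y) \<in> darts Q" using path_edge_dart[OF Q(3)] by blast
  with Q(2) have "ends g = {x,y}" by (simp add: path_dart)
  moreover have "(x,y) \<noteq> (u,w)" using g(2) xy Q(1) unfolding system_darts_def by blast
  ultimately have "x = w" "y = u" using g(1) by (auto simp: doubleton_eq_iff)
  with xy show ?thesis unfolding mem_darts_on by auto
qed

lemma partial_linkage_residual_step:
  assumes PL: "partial_linkage e PP R" and res: "residual (insert R PP) e (last (fst R)) w"
  obtains PP' R' where "partial_linkage e PP' R'" "last (fst R') = w"
    "system_darts (insert R' PP') \<subseteq> system_darts (insert R PP) \<union> {d. fst d = last (fst R)}"
proof -
  from res obtain g where g: "g \<in> E" "g \<noteq> e" "ends g = {last (fst R), w}" "w \<noteq> s"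
    and unused: "(last (fst R), g, w) \<notin> system_darts (insert R PP)"
    unfolding residual_def by blast
  from PL have sys: "st_system V E ends s t PP" and R: "path R"
    unfolding partial_linkage_def by auto
  have reversed: "\<exists>i<length (snd Q). fst Q ! i = w \<and> fst Q ! Suc i = last (fst R)"
    if "Q \<in> insert R PP" "path Q" "g \<in> set (snd Q)" for Q
    using unused_edge_traversed_backwards[OF that g(3) unused] .
  consider "g \<notin> edges_of (insert R PP)" | "g \<in> set (snd R)" | P where "P \<in> PP" "g \<in> set (snd P)"
    unfolding edges_of_def by blast
  then show thesis
  proof cases
    case 1
    obtain R' where R': "partial_linkage e PP R'" "last (fst R') = w"
      "system_darts (insert R' PP) \<subseteq> insert (last (fst R), g, w) (system_darts (insert R PP))"
      by (rule partial_linkage_extend[OF PL g 1])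
    show thesis by (rule that[OF R'(1,2)]) (use R'(3) in auto)
  next
    case 2
    then obtain i where i: "i < length (snd R)" "fst R ! i = w" using reversed R by blast
    then have R': "partial_linkage e PP (path_prefix R i)" "last (fst (path_prefix R i)) = w"
      using partial_linkage_retract[OF PL, of i] g(4) last_path_prefix[OF R, of i] by simp_all
    have "system_darts (insert (path_prefix R i) PP) \<subseteq> system_darts (insert R PP)"
      using darts_on_mono[of "{..<i}" UNIV R] i by (auto simp: system_darts_insert darts_path_prefix)
    then show thesis by (intro that[OF R']) blast
  next
    case 3
    with sys have P: "path P" unfolding st_system_def st_path_def by blast
    with 3 obtain i where i: "i < length (snd P)" "fst P ! i = w" "fst P ! Suc i = last (fst R)"
      using reversed by blast
    with g(4) have ne: "fst P ! i \<noteq> s" by simp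
    obtain Pn where Pn: "partial_linkage e (insert Pn (PP - {P})) (path_prefix P i)"
      "darts Pn \<subseteq> darts R \<union> darts P"
      by (rule partial_linkage_swap[OF PL 3(1) i(1) ne i(3)])
    have last': "last (fst (path_prefix P i)) = w" using last_path_prefix[OF P, of i] i by simp
    have "darts (path_prefix P i) \<subseteq> darts P"
      using darts_on_mono[of "{..<i}" UNIV P] i by (simp add: darts_path_prefix)
    then have "system_darts (insert (path_prefix P i) (insert Pn (PP - {P}))) \<subseteq> system_darts (insert R PP)"
      using Pn(2) 3(1) unfolding system_darts_def by blast
    then show thesis by (intro that[OF Pn(1) last']) blast
  qed
qed

lemma partial_linkage_residual_path:
  assumes "partial_linkage e PP R" "(residual (insert R PP) e)\<^sup>*\<^sup>* (last (fst R)) t"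
  shows "\<exists>S. links V E ends s t S \<and> e \<notin> edges_of S"
proof -
  obtain ws where "rtrancl_path (residual (insert R PP) e) (last (fst R)) ws t" "distinct (last (fst R) # ws)"
    using assms(2) rtrancl_path_distinct unfolding rtranclp_eq_rtrancl_path by metis
  then show ?thesis using assms(1)
  proof (induction ws arbitrary: PP R)
    case Nil
    then have "last (fst R) = t" by (auto elim: rtrancl_path.cases)
    with Nil.prems(3) show ?case using links_of_partial_linkage by blast
  next
    case (Cons w ws)
    from Cons.prems(1) have step: "residual (insert R PP) e (last (fst R)) w"
      and rest: "rtrancl_path (residual (insert R PP) e) w ws t"
      by (auto elim: rtrancl_path.cases)
    obtain PP' R' where PL': "partial_linkage e PP' R'" "last (fst R') = w"
      and new: "system_darts (insert R' PP') \<subseteq> system_darts (insert R PP) \<union> {d. fst d = last (fst R)}"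
      by (rule partial_linkage_residual_step[OF Cons.prems(3) step])
    txt \<open>A step only creates darts leaving the old end of R, which the rest of the (distinct)
      residual path never visits again, so that rest stays residual.\<close>
    have "rtrancl_path (residual (insert R' PP') e) w ws t"
    proof (rule rtrancl_path_mono_on[OF rest])
      fix a b assume "a \<in> set (w # ws)" "residual (insert R PP) e a b"
      moreover from this(1) Cons.prems(2) have "a \<noteq> last (fst R)" by auto
      ultimately show "residual (insert R' PP') e a b" using residual_mono new by blast
    qed
    with Cons.IH[of R' PP'] Cons.prems(2) PL' show ?case by simp
  qed
qed

lemma EM_cut_oriented:
  assumes "EM_cut V E ends s t C" "C \<noteq> {}"
  obtains X QQ where "X \<subseteq> V" "s \<in> X" "t \<notin> X" "C = delta E ends X"
    "st_system V E ends s t QQ" "orthogonal C QQ"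
proof -
  from assms(1) obtain X0 QQ where X0: "X0 \<subseteq> V" "C = delta E ends X0"
    and QQ: "st_system V E ends s t QQ" "orthogonal C QQ"
    unfolding EM_cut_def st_cut_def is_cut_def by blast
  define X where "X = (if s \<in> X0 then X0 else V - X0)"
  have X: "X \<subseteq> V" "s \<in> X" "C = delta E ends X"
    unfolding X_def using X0 s_in_V delta_complement[OF X0(1)] by auto
  from assms(2) QQ(2) obtain Q where Q: "Q \<in> QQ" "card (C \<inter> set (snd Q)) = 1"
    unfolding orthogonal_def edges_of_def by blast
  from QQ(1) Q(1) have Qp: "path Q" "fst Q ! 0 = s" "fst Q ! length (snd Q) = t"
    unfolding st_system_def by (simp_all add: st_path_nth)
  with X Q(2) first_pos_unique_crossing(1,3)[OF Qp(1), of X] have "t \<notin> X" by force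
  with X QQ show thesis using that by blast
qed

lemma no_residual_from_s:
  assumes "delta E ends {s} \<subseteq> edges_of S" "\<And>P. P \<in> S \<Longrightarrow> path P \<and> hd (fst P) = s"
  shows "\<not> residual S e s w"
proof
  assume "residual S e s w"
  then obtain g where g: "g \<in> E" "ends g = {s,w}" "(s,g,w) \<notin> system_darts S" "w \<noteq> s"
    unfolding residual_def by blast
  then have "g \<in> delta E ends {s}" using delta_iff_ends[of g s w "{s}"] by simp
  with assms(1) obtain P where P: "P \<in> S" "g \<in> set (snd P)" unfolding edges_of_def by blast
  with assms(2) have Pp: "path P" "hd (fst P) = s" by auto
  obtain x y where xy: "(x,g,y) \<in> darts P" using path_edge_dart[OF P(2)] by blast
  with Pp have "ends g = {x,y}" "y \<noteq> s" using path_dart path_dart_not_into_hd by blast+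
  with g(2) have "x = s" "y = w" by (auto simp: doubleton_eq_iff)
  with xy P(1) g(3) show False unfolding system_darts_def by blast
qed

lemma partial_linkage_s_stuck:
  assumes PL: "partial_linkage e PP R"
  shows "\<not> (residual (insert R PP) e)\<^sup>*\<^sup>* s t"
proof
  assume "(residual (insert R PP) e)\<^sup>*\<^sup>* s t"
  then obtain w where "residual (insert R PP) e s w" using s_ne_t by (metis converse_rtranclpE)
  moreover have "delta E ends {s} \<subseteq> edges_of (insert R PP)" using PL unfolding partial_linkage_def by blast
  ultimately show False using no_residual_from_s partial_linkage_paths[OF PL] by blast
qed

lemma partial_linkage_of_links:
  assumes L: "links V E ends s t L" and P: "P \<in> L"
    and i: "i < length (snd P)" "snd P ! i = e" "fst P ! i \<noteq> s"
  shows "partial_linkage e (L - {P}) (path_prefix P i)"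
proof -
  from L have sys: "st_system V E ends s t L" and cover: "delta E ends {s} \<subseteq> edges_of L"
    unfolding links_def by auto
  from sys P have Pp: "path P" "fst P ! 0 = s"
    unfolding st_system_def by (simp_all add: st_path_nth)
  have disj: "set (snd Q) \<inter> set (snd P) = {}" if "Q \<in> L - {P}" for Q
    using sys P that unfolding st_system_def by blast
  define R where "R = path_prefix P i"
  have R: "path R" "hd (fst R) = s" "last (fst R) \<noteq> s" "set (snd R) = set (take i (snd P))"
    using path_prefix_path[OF Pp(1)] hd_path_prefix[OF Pp(1)] last_path_prefix[OF Pp(1)] i Pp(2)
    by (simp_all add: R_def path_prefix_def path_hd[OF Pp(1)])
  have "0 < i" using i(3) Pp(2) by (metis gr0I)
  then have first: "snd P ! 0 \<in> set (snd R)" unfolding R_def using i(1)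
    by (intro first_edge_in_path_prefix) auto
  have "e \<notin> set (take i (snd P))"
  proof
    assume "e \<in> set (take i (snd P))"
    then obtain j where "j < i" "snd P ! j = e" by (auto simp: in_set_conv_nth)
    with path_edge_inj[OF Pp(1), of j i] i show False by simp
  qed
  with R(4) have e_R: "e \<notin> set (snd R)" by simp
  have R_sub: "set (snd R) \<subseteq> set (snd P)" using R(4) set_take_subset by metis
  have "e \<in> set (snd P)" using i(1,2) by auto
  with e_R disj have "e \<notin> edges_of (insert R (L - {P}))" unfolding edges_of_def by blast
  moreover have "delta E ends {s} \<subseteq> edges_of (insert R (L - {P}))"
  proof (rule delta_s_covered_by_first_edges[OF cover])
    show "path Q \<and> hd (fst Q) = s" if "Q \<in> L" for Q
      using sys that unfolding st_system_def st_path_def by blast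
    fix Q assume "Q \<in> L" "Q \<notin> insert R (L - {P})"
    with first show "snd Q ! 0 \<in> edges_of (insert R (L - {P}))" unfolding edges_of_def by auto
  qed
  moreover have "\<forall>Q\<in>L - {P}. set (snd Q) \<inter> set (snd R) = {}"
    using disj R_sub by blast
  moreover have "st_system V E ends s t (L - {P})" using sys by (rule st_system_subset) blast
  ultimately show ?thesis using R unfolding partial_linkage_def R_def by blast
qed

lemma EM_cut_of_outward_delta:
  assumes L: "st_system V E ends s t L" and Z: "Z \<subseteq> V" "s \<in> Z" "t \<notin> Z"
    and outward: "\<And>g. g \<in> delta E ends Z \<Longrightarrow> \<exists>u w. (u,g,w) \<in> system_darts L \<and> u \<in> Z \<and> w \<notin> Z"
  shows "EM_cut V E ends s t (delta E ends Z)" "delta E ends Z \<subseteq> edges_of L"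
proof -
  have Lp: "path P" "hd (fst P) = s" "last (fst P) = t" if "P \<in> L" for P
    using L that unfolding st_system_def st_path_def by auto
  show used: "delta E ends Z \<subseteq> edges_of L"
  proof
    fix g assume "g \<in> delta E ends Z"
    with outward obtain u w P where P: "P \<in> L" "(u,g,w) \<in> darts P" unfolding system_darts_def by blast
    then have "g \<in> set (snd P)" using path_dart[OF Lp(1)[OF P(1)] P(2)] by blast
    with P(1) show "g \<in> edges_of L" unfolding edges_of_def by blast
  qed
  have "card (delta E ends Z \<inter> set (snd P)) = 1" if P: "P \<in> L" for P
  proof (rule path_crosses_once[OF Lp(1)[OF P]])
    show "hd (fst P) \<in> Z" "last (fst P) \<notin> Z" using Lp[OF P] Z by auto
    fix x g y assume xgy: "(x,g,y) \<in> darts P" "g \<in> delta E ends Z"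
    with outward obtain u w P' where P': "P' \<in> L" "(u,g,w) \<in> darts P'" "u \<in> Z"
      unfolding system_darts_def by blast
    have "g \<in> set (snd P)" using path_dart[OF Lp(1)[OF P] xgy(1)] by blast
    moreover have "g \<in> set (snd P')" using path_dart[OF Lp(1)[OF P'(1)] P'(2)] by blast
    ultimately have "P' = P" using L P P'(1) unfolding st_system_def by blast
    with P'(2) have "x = u" using path_dart_unique[OF Lp(1)[OF P] xgy(1)] by blast
    with P'(3) show "x \<in> Z" by simp
  qed
  with used L have "orthogonal (delta E ends Z) L" unfolding orthogonal_def by blast
  moreover have "\<not> (\<exists>P. st_path V (E - delta E ends Z) ends s t P)"
  proof
    assume "\<exists>P. st_path V (E - delta E ends Z) ends s t P"
    then obtain P where "st_path V (E - delta E ends Z) ends s t P" by blast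
    then have P: "path P" "hd (fst P) = s" "last (fst P) = t" "set (snd P) \<subseteq> E - delta E ends Z"
      unfolding st_path_def is_path_def by auto
    from P(2,3) Z have "hd (fst P) \<in> Z" "last (fst P) \<notin> Z" by auto
    then obtain i where "i < length (snd P)" "snd P ! i \<in> delta E ends Z"
      using path_meets_delta[OF P(1)] by blast
    with P(4) show False by (meson DiffD2 nth_mem subsetD)
  qed
  ultimately show "EM_cut V E ends s t (delta E ends Z)"
    using L Z(1) unfolding EM_cut_def st_cut_def is_cut_def by blast
qed

end

section \<open>Rerouting along a system orthogonal to C\<close>

locale oriented_EM_cut = st_graph V E ends s t
  for V :: "'v set" and E :: "'e set" and ends :: "'e \<Rightarrow> 'v set" and s t :: 'v +
  fixes C :: "'e set" and X :: "'v set" and QQ :: "('v,'e) path set"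
  assumes X: "X \<subseteq> V" "s \<in> X" "t \<notin> X" and C_eq: "C = delta E ends X"
    and QQ: "st_system V E ends s t QQ" "orthogonal C QQ"
begin

lemma orth_path: "Q \<in> QQ \<Longrightarrow> path Q \<and> fst Q ! 0 = s \<and> fst Q ! length (snd Q) = t"
  using QQ(1) st_path_nth unfolding st_system_def by blast

lemma orth_crossing:
  assumes "Q \<in> QQ"
  shows "first_pos C Q < length (snd Q)"
    "\<And>k. k < length (snd Q) \<Longrightarrow> snd Q ! k \<in> C \<longleftrightarrow> k = first_pos C Q"
    "\<And>k. k \<le> length (snd Q) \<Longrightarrow> fst Q ! k \<in> X \<longleftrightarrow> k \<le> first_pos C Q"
proof -
  have Q: "path Q" "fst Q ! 0 \<in> X" using orth_path[OF assms] X(2) by auto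
  have "card (delta E ends X \<inter> set (snd Q)) = 1" using QQ(2) assms unfolding orthogonal_def C_eq by blast
  note crossing = first_pos_unique_crossing[OF Q this, folded C_eq]
  show "first_pos C Q < length (snd Q)" by (rule crossing(1))
  show "snd Q ! k \<in> C \<longleftrightarrow> k = first_pos C Q" if "k < length (snd Q)" for k
    using crossing(2)[OF that] unfolding C_eq .
  show "fst Q ! k \<in> X \<longleftrightarrow> k \<le> first_pos C Q" if "k \<le> length (snd Q)" for k
    by (rule crossing(3)[OF that])
qed

lemma st_path_crossing:
  assumes "st_path V E ends s t P"
  shows "first_pos C P < length (snd P)" "snd P ! first_pos C P \<in> C"
    "\<And>k. k < first_pos C P \<Longrightarrow> snd P ! k \<notin> C" "\<And>k. k \<le> first_pos C P \<Longrightarrow> fst P ! k \<in> X"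
    "fst P ! Suc (first_pos C P) \<notin> X"
proof -
  have P: "path P" "hd (fst P) \<in> X" "last (fst P) \<notin> X" using assms X unfolding st_path_def by auto
  note crossing = first_pos_crossing[OF P, folded C_eq]
  show "first_pos C P < length (snd P)" "snd P ! first_pos C P \<in> C" "fst P ! Suc (first_pos C P) \<notin> X"
    using crossing(1,2,5) unfolding C_eq .
  show "snd P ! k \<notin> C" if "k < first_pos C P" for k using crossing(3)[OF that] unfolding C_eq .
  show "fst P ! k \<in> X" if "k \<le> first_pos C P" for k by (rule crossing(4)[OF that])
qed

lemma cut_edge_first_on_orth:
  assumes "g \<in> C"
  obtains Q where "Q \<in> QQ" "snd Q ! first_pos C Q = g"
proof -
  from assms QQ(2) obtain Q where Q: "Q \<in> QQ" "g \<in> set (snd Q)" unfolding orthogonal_def edges_of_def by blast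
  then obtain k where "k < length (snd Q)" "snd Q ! k = g" by (auto simp: in_set_conv_nth)
  with assms orth_crossing(2)[OF Q(1)] have "snd Q ! first_pos C Q = g" by blast
  with Q(1) show thesis by (rule that)
qed

definition cut_head :: "('v,'e) path \<Rightarrow> 'e set" where
  "cut_head P = set (take (Suc (first_pos C P)) (snd P))"

definition cut_tail :: "('v,'e) path \<Rightarrow> 'e set" where
  "cut_tail Q = set (drop (Suc (first_pos C Q)) (snd Q))"

lemma orth_tail:
  assumes "Q \<in> QQ" "g \<in> cut_tail Q"
  obtains k where "first_pos C Q < k" "k < length (snd Q)" "g = snd Q ! k" "g \<notin> C"
    "fst Q ! k \<notin> X" "fst Q ! Suc k \<notin> X"
proof -
  from assms(2) obtain j where j: "j < length (snd Q) - Suc (first_pos C Q)"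
    "g = snd Q ! (Suc (first_pos C Q) + j)"
    unfolding cut_tail_def by (auto simp: in_set_conv_nth)
  define k where "k = Suc (first_pos C Q) + j"
  have "first_pos C Q < k" "k < length (snd Q)" "g = snd Q ! k" using j unfolding k_def by auto
  with orth_crossing[OF assms(1)] show thesis by (intro that) auto
qed

lemma head_tail_disjoint:
  assumes P: "st_path V E ends s t P" and Q: "Q \<in> QQ"
  shows "cut_head P \<inter> cut_tail Q = {}"
proof -
  have False if head: "g \<in> cut_head P"
    and tail: "g \<in> cut_tail Q" for g
  proof -
  from head obtain k where k: "k \<le> first_pos C P" "k < length (snd P)" "g = snd P ! k"
    unfolding cut_head_def by (auto simp: in_set_conv_nth less_Suc_eq_le)
  with P have "fst P ! k \<in> ends g" "fst P ! k \<in> X"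
    using st_path_crossing(4)[OF P] path_edge_ends[of P k] unfolding st_path_def by auto
  moreover obtain m where "m < length (snd Q)" "g = snd Q ! m" "fst Q ! m \<notin> X" "fst Q ! Suc m \<notin> X"
    using orth_tail[OF Q tail] by metis
  with Q have "ends g \<inter> X = {}" using orth_path path_edge_ends by auto
  ultimately show False by blast
  qed
  then show ?thesis by blast
qed

lemma first_cut_edges_meet:
  assumes P: "st_path V E ends s t P" and Q: "Q \<in> QQ"
    and same: "snd Q ! first_pos C Q = snd P ! first_pos C P"
  shows "fst P ! Suc (first_pos C P) = fst Q ! Suc (first_pos C Q)"
proof -
  note Pc = st_path_crossing[OF P] and Qc = orth_crossing[OF Q]
  have "{fst P ! first_pos C P, fst P ! Suc (first_pos C P)} = {fst Q ! first_pos C Q, fst Q ! Suc (first_pos C Q)}"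
    using path_edge_ends[OF _ Pc(1)] path_edge_ends[OF _ Qc(1)] st_path_nth[OF P] orth_path[OF Q] same
    by metis
  moreover have "fst P ! first_pos C P \<in> X" "fst Q ! first_pos C Q \<in> X" "fst Q ! Suc (first_pos C Q) \<notin> X"
    using Pc(4) Qc(1,3) by auto
  ultimately show ?thesis using Pc(5) by (auto simp: doubleton_eq_iff)
qed

lemma head_tail_cut_darts:
  assumes P: "st_path V E ends s t P" and Q: "Q \<in> QQ"
    and d: "(x,g,y) \<in> darts_on P {..<Suc (first_pos C P)} \<union> darts_on Q {Suc (first_pos C Q)..}"
    and "g \<in> C"
  shows "x \<in> X \<and> y \<notin> X \<and> g = snd P ! first_pos C P"
  using d
proof
  assume "(x,g,y) \<in> darts_on P {..<Suc (first_pos C P)}"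
  then obtain k where k: "k \<le> first_pos C P" "k < length (snd P)" "x = fst P ! k" "g = snd P ! k"
      "y = fst P ! Suc k"
    unfolding mem_darts_on by (auto simp: less_Suc_eq_le)
  with \<open>g \<in> C\<close> st_path_crossing(3)[OF P] have "k = first_pos C P" by (meson le_neq_implies_less)
  with k st_path_crossing(4,5)[OF P] show ?thesis by auto
next
  assume "(x,g,y) \<in> darts_on Q {Suc (first_pos C Q)..}"
  then obtain k where "Suc (first_pos C Q) \<le> k" "k < length (snd Q)" "g = snd Q ! k"
    unfolding mem_darts_on by auto
  with orth_crossing(2)[OF Q] \<open>g \<in> C\<close> show ?thesis by simp
qed

lemma orth_tail_vertices_outside:
  assumes Q: "Q \<in> QQ"
  shows "set (drop (Suc (first_pos C Q)) (fst Q)) \<inter> X = {}"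
proof -
  have "fst Q ! (Suc (first_pos C Q) + j) \<notin> X" if "j < length (fst Q) - Suc (first_pos C Q)" for j
    using that orth_crossing(3)[OF Q, of "Suc (first_pos C Q) + j"] path_length orth_path[OF Q] by simp
  then show ?thesis by (auto simp: in_set_conv_nth)
qed

text \<open>P' follows P up to its first C-edge and continues along the path Q of QQ through that edge.\<close>

definition rerouting :: "('v,'e) path \<Rightarrow> ('v,'e) path \<Rightarrow> ('v,'e) path \<Rightarrow> bool" where
  "rerouting P Q P' \<longleftrightarrow> Q \<in> QQ \<and> snd Q ! first_pos C Q = snd P ! first_pos C P \<and>
     st_path V E ends s t P' \<and> set (snd P') \<subseteq> cut_head P \<union> cut_tail Q \<and>
     snd P ! 0 \<in> set (snd P') \<and> snd P ! first_pos C P \<in> set (snd P') \<and>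
     (\<forall>x g y. (x,g,y) \<in> darts P' \<longrightarrow> g \<in> C \<longrightarrow> x \<in> X \<and> y \<notin> X \<and> g = snd P ! first_pos C P)"

lemma rerouting_exists:
  assumes P: "st_path V E ends s t P"
  shows "\<exists>Q P'. rerouting P Q P'"
proof -
  define f where "f = first_pos C P"
  have Pp: "path P" "fst P ! 0 = s" using st_path_nth[OF P] by auto
  note Pc = st_path_crossing[OF P, folded f_def]
  obtain Q where Q: "Q \<in> QQ" "snd Q ! first_pos C Q = snd P ! f" using cut_edge_first_on_orth[OF Pc(2)] by blast
  define fq where "fq = first_pos C Q"
  have Qp: "path Q" "last (fst Q) = t" using orth_path[OF Q(1)] path_last by auto
  define A where "A = path_prefix P (Suc f)"
  have "Suc f \<le> length (snd P)" using Pc(1) by simp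
  then have A: "path A" "hd (fst A) = s" "last (fst A) = fst P ! Suc f" "darts A = darts_on P {..<Suc f}"
    using path_prefix_path[OF Pp(1)] hd_path_prefix[OF Pp(1)] last_path_prefix[OF Pp(1)]
      darts_path_prefix Pp(2) unfolding A_def by (simp_all add: path_hd[OF Pp(1)])
  have A_edges: "set (snd A) = cut_head P" "snd A ! 0 = snd P ! 0"
    unfolding A_def path_prefix_def cut_head_def f_def using Pc(1) by auto
  have "last (fst A) \<noteq> hd (fst A)" using A(2,3) Pc(5) X(2) by auto
  moreover have "fst Q ! Suc fq = last (fst A)"
    using first_cut_edges_meet[OF P Q(1)] Q(2) A(3) unfolding f_def fq_def by simp
  moreover have "hd (fst A) \<notin> set (drop (Suc fq) (fst Q))"
    using orth_tail_vertices_outside[OF Q(1)] A(2) X(2) unfolding fq_def by blast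
  moreover have "set (snd A) \<inter> set (drop (Suc fq) (snd Q)) = {}"
    using head_tail_disjoint[OF P Q(1)] A_edges(1) unfolding cut_tail_def fq_def by simp
  ultimately obtain P' where P': "path P'" "hd (fst P') = s" "last (fst P') = t"
      "darts P' \<subseteq> darts A \<union> darts_on Q {Suc fq..}"
      "set (snd P') \<subseteq> set (snd A) \<union> set (drop (Suc fq) (snd Q))" "snd A ! 0 \<in> set (snd P')"
    using path_join_suffix[OF A(1) _ Qp(1) orth_crossing(1)[OF Q(1), folded fq_def]] A(2) Qp(2)
    by (metis (no_types))
  have P'_st: "st_path V E ends s t P'" using P'(1-3) unfolding st_path_def by blast
  have darts_C: "x \<in> X \<and> y \<notin> X \<and> g = snd P ! f" if "(x,g,y) \<in> darts P'" "g \<in> C" for x g y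
    using head_tail_cut_darts[OF P Q(1) _ that(2)] that(1) P'(4) unfolding A(4) f_def fq_def by blast
  have "(fst P' ! first_pos C P', snd P' ! first_pos C P', fst P' ! Suc (first_pos C P')) \<in> darts P'"
    using st_path_crossing(1)[OF P'_st] unfolding mem_darts_on by blast
  with darts_C st_path_crossing(1,2)[OF P'_st] have "snd P ! f \<in> set (snd P')" by (metis nth_mem)
  moreover have "set (snd P') \<subseteq> cut_head P \<union> cut_tail Q"
    using P'(5) A_edges(1) unfolding cut_tail_def fq_def by simp
  ultimately have "rerouting P Q P'"
    unfolding rerouting_def using Q P'_st P'(6) A_edges(2) darts_C unfolding f_def by auto
  then show ?thesis by blast
qed

lemma rerouting_avoids_other_tails:
  assumes P: "st_path V E ends s t P" and "rerouting P Q' P'" and Q: "Q \<in> QQ" "Q \<noteq> Q'"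
  shows "cut_tail Q \<inter> set (snd P') = {}"
proof -
  from assms(2) have "Q' \<in> QQ" "set (snd P') \<subseteq> cut_head P \<union> cut_tail Q'" unfolding rerouting_def by auto
  moreover have "set (snd Q) \<inter> set (snd Q') = {}" using QQ(1) Q \<open>Q' \<in> QQ\<close> unfolding st_system_def by blast
  moreover have "cut_tail Q \<subseteq> set (snd Q)" "cut_tail Q' \<subseteq> set (snd Q')"
    unfolding cut_tail_def by (simp_all add: set_drop_subset)
  ultimately show ?thesis using head_tail_disjoint[OF P Q(1)] by blast
qed

lemma reroutings_disjoint:
  assumes L: "st_system V E ends s t L" and P: "P1 \<in> L" "P2 \<in> L" "P1 \<noteq> P2"
    and R: "rerouting P1 Q1 P1'" "rerouting P2 Q2 P2'"
  shows "set (snd P1') \<inter> set (snd P2') = {}"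
proof -
  have P_st: "st_path V E ends s t P1" "st_path V E ends s t P2" using L P unfolding st_system_def by auto
  have disj: "set (snd P1) \<inter> set (snd P2) = {}" using L P unfolding st_system_def by blast
  have "snd P1 ! first_pos C P1 \<in> set (snd P1)" "snd P2 ! first_pos C P2 \<in> set (snd P2)"
    using st_path_crossing(1) P_st by auto
  with disj R have "Q1 \<noteq> Q2" unfolding rerouting_def by force
  with R have "cut_tail Q2 \<inter> set (snd P1') = {}"
    using rerouting_avoids_other_tails[OF P_st(1) R(1)] unfolding rerouting_def by blast
  moreover have "set (snd P2') \<subseteq> cut_head P2 \<union> cut_tail Q2" "set (snd P1') \<subseteq> cut_head P1 \<union> cut_tail Q1"
    using R unfolding rerouting_def by blast+
  moreover have "cut_head P1 \<inter> cut_head P2 = {}"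
    using disj unfolding cut_head_def by (meson disjoint_iff in_set_takeD)
  moreover have "cut_head P2 \<inter> cut_tail Q1 = {}"
    using head_tail_disjoint[OF P_st(2)] R(1) unfolding rerouting_def by blast
  ultimately show ?thesis by blast
qed

definition crosses_outward :: "('v,'e) path set \<Rightarrow> bool" where
  "crosses_outward L \<longleftrightarrow> (\<forall>P\<in>L. \<forall>x g y. (x,g,y) \<in> darts P \<longrightarrow> g \<in> C \<longrightarrow> x \<in> X \<and> y \<notin> X)"

definition spares_unused_tails :: "('v,'e) path set \<Rightarrow> bool" where
  "spares_unused_tails L \<longleftrightarrow>
     (\<forall>Q\<in>QQ. snd Q ! first_pos C Q \<notin> edges_of L \<longrightarrow> cut_tail Q \<inter> edges_of L = {})"

lemma crosses_outward_dart:
  assumes L: "st_system V E ends s t L" and out: "crosses_outward L"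
    and g: "g \<in> C" "g \<in> edges_of L" "ends g = {u,w}" "u \<in> X"
  shows "(u,g,w) \<in> system_darts L"
proof -
  from g(2) obtain P where P: "P \<in> L" "g \<in> set (snd P)" unfolding edges_of_def by blast
  obtain x y where xy: "(x,g,y) \<in> darts P" using path_edge_dart[OF P(2)] by blast
  with out P(1) g(1) have "x \<in> X" "y \<notin> X" unfolding crosses_outward_def by auto
  moreover have "path P" using L P(1) unfolding st_system_def st_path_def by blast
  with xy have "ends g = {x,y}" using path_dart by blast
  ultimately have "x = u" "y = w" using g(3,4) by (auto simp: doubleton_eq_iff)
  with xy P(1) show ?thesis unfolding system_darts_def by blast
qed

lemma rerouted_linking_system:
  assumes L: "links V E ends s t L"
  obtains L' where "links V E ends s t L'" "crosses_outward L'" "spares_unused_tails L'"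
    "\<And>P' x g y. P' \<in> L' \<Longrightarrow> (x,g,y) \<in> darts P' \<Longrightarrow> g \<in> C \<Longrightarrow> \<exists>P\<in>L. g = snd P ! first_pos C P"
proof -
  from L have sys: "st_system V E ends s t L" and cover: "delta E ends {s} \<subseteq> edges_of L"
    unfolding links_def by auto
  have Lst: "st_path V E ends s t P" if "P \<in> L" for P using sys that unfolding st_system_def by blast
  have "\<forall>P\<in>L. \<exists>QP'. rerouting P (fst QP') (snd QP')" using rerouting_exists Lst by simp
  then obtain c where c: "\<And>P. P \<in> L \<Longrightarrow> rerouting P (fst (c P)) (snd (c P))" by (metis bchoice)
  define L' where "L' = (\<lambda>P. snd (c P)) ` L"
  have "st_system V E ends s t L'"
    unfolding st_system_def
  proof (intro conjI ballI impI)
    fix P' assume "P' \<in> L'"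
    then show "st_path V E ends s t P'" using c unfolding L'_def rerouting_def by blast
  next
    fix P1' P2' assume "P1' \<in> L'" "P2' \<in> L'" "P1' \<noteq> P2'"
    then obtain P1 P2 where "P1 \<in> L" "P2 \<in> L" "P1 \<noteq> P2" "P1' = snd (c P1)" "P2' = snd (c P2)"
      unfolding L'_def by blast
    then show "set (snd P1') \<inter> set (snd P2') = {}"
      using reroutings_disjoint[OF sys _ _ _ c c] by blast
  qed
  moreover have "delta E ends {s} \<subseteq> edges_of L'"
  proof (rule delta_s_covered_by_first_edges[OF cover])
    show "path P \<and> hd (fst P) = s" if "P \<in> L" for P using Lst[OF that] unfolding st_path_def by blast
    fix P assume "P \<in> L"
    with c show "snd P ! 0 \<in> edges_of L'" unfolding L'_def edges_of_def rerouting_def by blast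
  qed
  ultimately have "links V E ends s t L'" unfolding links_def by blast
  moreover have "crosses_outward L'"
    unfolding crosses_outward_def L'_def using c unfolding rerouting_def by blast
  moreover have "spares_unused_tails L'"
    unfolding spares_unused_tails_def
  proof (intro ballI impI)
    fix Q assume Q: "Q \<in> QQ" "snd Q ! first_pos C Q \<notin> edges_of L'"
    have "cut_tail Q \<inter> set (snd (snd (c P))) = {}" if P: "P \<in> L" for P
    proof (rule rerouting_avoids_other_tails[OF Lst[OF P] c[OF P] Q(1)])
      from c[OF P] have "snd (fst (c P)) ! first_pos C (fst (c P)) \<in> set (snd (snd (c P)))"
        unfolding rerouting_def by simp
      then have "snd (fst (c P)) ! first_pos C (fst (c P)) \<in> edges_of L'"
        using P unfolding L'_def edges_of_def by blast
      with Q(2) show "Q \<noteq> fst (c P)" by blast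
    qed
    then show "cut_tail Q \<inter> edges_of L' = {}" unfolding L'_def edges_of_def by blast
  qed
  moreover have "\<exists>P\<in>L. g = snd P ! first_pos C P"
    if "P' \<in> L'" "(x,g,y) \<in> darts P'" "g \<in> C" for P' x g y
    using that c unfolding L'_def rerouting_def by blast
  ultimately show thesis by (rule that)
qed

lemma orth_tail_residual_reach:
  assumes Q: "Q \<in> QQ" and e: "e \<in> C"
    and unused: "cut_tail Q \<inter> edges_of S = {}"
  shows "(residual S e)\<^sup>*\<^sup>* (fst Q ! Suc (first_pos C Q)) t"
proof -
  define fq where "fq = first_pos C Q"
  have Qp: "path Q" "fst Q ! length (snd Q) = t" using orth_path[OF Q] by auto
  note Qc = orth_crossing[OF Q, folded fq_def]
  have "(residual S e)\<^sup>*\<^sup>* (fst Q ! Suc fq) (fst Q ! length (snd Q))"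
  proof (rule rtranclp_chain)
    show "Suc fq \<le> length (snd Q)" using Qc(1) by simp
    fix k assume k: "Suc fq \<le> k" "k < length (snd Q)"
    have "snd Q ! k = drop (Suc fq) (snd Q) ! (k - Suc fq)" using k by simp
    moreover have "k - Suc fq < length (drop (Suc fq) (snd Q))" using k by simp
    ultimately have "snd Q ! k \<in> cut_tail Q" unfolding cut_tail_def fq_def by (metis nth_mem)
    with unused have "snd Q ! k \<notin> dart_edges (system_darts S)"
      unfolding dart_edges_system_darts fq_def by blast
    then have "(fst Q ! k, snd Q ! k, fst Q ! Suc k) \<notin> system_darts S" by (auto dest: mem_dart_edges)
    moreover have "snd Q ! k \<noteq> e" using Qc(2)[OF k(2)] k(1) e by auto
    moreover have "fst Q ! Suc k \<noteq> s" using Qc(3)[of "Suc k"] k X(2) by auto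
    ultimately show "residual S e (fst Q ! k) (fst Q ! Suc k)"
      unfolding residual_def using path_edge_in_E[OF Qp(1) k(2)] path_edge_ends[OF Qp(1) k(2)] by blast
  qed
  with Qp(2) show ?thesis unfolding fq_def by simp
qed

lemma residual_cut_outward:
  assumes e: "e \<in> C" "e \<in> edges_of L'" and L': "st_system V E ends s t L'"
    and out: "crosses_outward L'" and tails: "spares_unused_tails L'"
    and S: "system_darts S \<subseteq> system_darts L'"
  defines "Z \<equiv> X - {v. (residual S e)\<^sup>*\<^sup>* v t}"
  assumes sZ: "s \<in> Z" and g: "g \<in> delta E ends Z"
  shows "\<exists>u w. (u,g,w) \<in> system_darts L' \<and> u \<in> Z \<and> w \<notin> Z"
proof -
  have gE: "g \<in> E" using g unfolding delta_def by blast
  then obtain a b where ab: "ends g = {a,b}" "a \<noteq> b" by (rule edge_ends_obtain)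
  with g gE have "(a \<in> Z) \<noteq> (b \<in> Z)" using delta_iff_ends by blast
  then obtain u w where uw: "ends g = {u,w}" "u \<in> Z" "w \<notin> Z"
    using ab(1) by (metis insert_commute)
  have uX: "u \<in> X" using uw(2) unfolding Z_def by blast
  txt \<open>Otherwise g is a residual arc, so its head lies outside X; then g is an edge of C unused by
    L', and the tail of its orthogonal path leads residually to t.\<close>
  have "(u,g,w) \<in> system_darts L'"
  proof (rule ccontr)
    assume unused: "(u,g,w) \<notin> system_darts L'"
    have C_unused: "g \<notin> edges_of L'" if "g \<in> C"
      using crosses_outward_dart[OF L' out that _ uw(1) uX] unused by blast
    have "g \<noteq> e" using C_unused e by blast
    moreover have "(u,g,w) \<notin> system_darts S" using unused S by blast
    moreover have "w \<noteq> s" using uw(3) sZ by blast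
    ultimately have step: "residual S e u w" unfolding residual_def using gE uw(1) by blast
    have wT: "\<not> (residual S e)\<^sup>*\<^sup>* w t"
      using uw(2) converse_rtranclp_into_rtranclp[of "residual S e", OF step] unfolding Z_def by blast
    with uw(3) have "w \<notin> X" unfolding Z_def by blast
    with uX have gC: "g \<in> C" unfolding C_eq using delta_iff_ends[OF gE uw(1)] by auto
    then obtain Q where Q: "Q \<in> QQ" "snd Q ! first_pos C Q = g" by (rule cut_edge_first_on_orth)
    have "edges_of S \<subseteq> edges_of L'"
      using dart_edges_mono[OF S] unfolding dart_edges_system_darts .
    with tails Q C_unused[OF gC]
    have "cut_tail Q \<inter> edges_of S = {}" unfolding spares_unused_tails_def by blast
    from orth_tail_residual_reach[OF Q(1) e(1) this]
    have reach: "(residual S e)\<^sup>*\<^sup>* (fst Q ! Suc (first_pos C Q)) t" .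
    have "ends g = {fst Q ! first_pos C Q, fst Q ! Suc (first_pos C Q)}"
      using path_edge_ends orth_path[OF Q(1)] orth_crossing(1)[OF Q(1)] Q(2) by metis
    moreover have "fst Q ! first_pos C Q \<in> X" using orth_crossing(1,3)[OF Q(1)] by simp
    ultimately have "w = fst Q ! Suc (first_pos C Q)" using uw(1) \<open>w \<notin> X\<close> by (auto simp: doubleton_eq_iff)
    with reach wT show False by simp
  qed
  with uw show ?thesis by blast
qed

lemma cut_edge_crossing_in_system:
  assumes L': "st_system V E ends s t L'" and e: "e \<in> edges_of L'" "e \<in> C" "e \<notin> delta E ends {s}"
    and out: "crosses_outward L'"
  obtains P i where "P \<in> L'" "i < length (snd P)" "snd P ! i = e"
    "fst P ! i \<in> X" "fst P ! Suc i \<notin> X" "fst P ! i \<noteq> s"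
proof -
  from e(1) obtain P i where P: "P \<in> L'" "i < length (snd P)" "snd P ! i = e"
    unfolding edges_of_def by (auto simp: in_set_conv_nth)
  then have "(fst P ! i, e, fst P ! Suc i) \<in> darts P" unfolding mem_darts_on by auto
  with out P(1) e(2) have X_side: "fst P ! i \<in> X" "fst P ! Suc i \<notin> X"
    unfolding crosses_outward_def by auto
  have "path P" using L' P(1) unfolding st_system_def st_path_def by blast
  with P(2,3) e(3) have "(fst P ! i \<in> {s}) = (fst P ! Suc i \<in> {s})"
    using path_edge_in_delta_iff by blast
  with X_side X(2) have "fst P ! i \<noteq> s" by auto
  with P X_side show thesis by (rule that)
qed

lemma inner_cut:
  assumes forced: "\<forall>S. links V E ends s t S \<longrightarrow> e \<in> edges_of S"
    and e: "e \<in> C" "e \<notin> delta E ends {s}" and L': "links V E ends s t L'"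
    and out: "crosses_outward L'" and tails: "spares_unused_tails L'"
  obtains Z where "Z \<subseteq> X" "s \<in> Z" "EM_cut V E ends s t (delta E ends Z)" "e \<in> delta E ends Z"
    "delta E ends Z \<subseteq> edges_of L'"
proof -
  from L' have sys: "st_system V E ends s t L'" unfolding links_def by blast
  have L'_paths: "path P" "hd (fst P) = s" if "P \<in> L'" for P
    using sys that unfolding st_system_def st_path_def by blast+
  from forced L' have "e \<in> edges_of L'" by blast
  then obtain Pe i where Pe: "Pe \<in> L'" "i < length (snd Pe)" "snd Pe ! i = e"
      "fst Pe ! i \<in> X" "fst Pe ! Suc i \<notin> X" "fst Pe ! i \<noteq> s"
    using cut_edge_crossing_in_system[OF sys _ e out] by blast
  have Pe_path: "path Pe" using L'_paths(1)[OF Pe(1)] .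
  define R0 where "R0 = path_prefix Pe i"
  define S0 where "S0 = insert R0 (L' - {Pe})"
  have PL: "partial_linkage e (L' - {Pe}) R0"
    unfolding R0_def using partial_linkage_of_links[OF L' Pe(1-3,6)] .
  have last_R0: "last (fst R0) = fst Pe ! i"
    unfolding R0_def using last_path_prefix[OF Pe_path] Pe(2) by simp
  have "darts R0 \<subseteq> darts Pe"
    using darts_on_mono[of "{..<i}" UNIV Pe] darts_path_prefix[of i Pe] Pe(2) unfolding R0_def by simp
  then have S0_darts: "system_darts S0 \<subseteq> system_darts L'"
    using Pe(1) unfolding S0_def system_darts_def by blast
  define Z where "Z = X - {v. (residual S0 e)\<^sup>*\<^sup>* v t}"
  txt \<open>If the tail of e reached t, augmenting along that path would give a linking system avoiding e.\<close>
  have "\<not> (residual S0 e)\<^sup>*\<^sup>* (fst Pe ! i) t"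
  proof
    assume "(residual S0 e)\<^sup>*\<^sup>* (fst Pe ! i) t"
    with partial_linkage_residual_path[OF PL] last_R0 obtain S where "links V E ends s t S" "e \<notin> edges_of S"
      unfolding S0_def by auto
    with forced show False by blast
  qed
  with partial_linkage_s_stuck[OF PL] X Pe(4,5)
  have Z: "Z \<subseteq> X" "s \<in> Z" "t \<notin> Z" "fst Pe ! i \<in> Z" "fst Pe ! Suc i \<notin> Z"
    unfolding Z_def S0_def by auto
  have outward: "\<exists>u w. (u,g,w) \<in> system_darts L' \<and> u \<in> Z \<and> w \<notin> Z"
    if "g \<in> delta E ends Z" for g
    using residual_cut_outward[OF e(1) \<open>e \<in> edges_of L'\<close> sys out tails S0_darts, folded Z_def, OF Z(2) that] .
  have "Z \<subseteq> V" using Z(1) X(1) by blast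
  then have cut: "EM_cut V E ends s t (delta E ends Z)" "delta E ends Z \<subseteq> edges_of L'"
    using EM_cut_of_outward_delta[OF sys _ Z(2,3)] outward by blast+
  have "e \<in> delta E ends Z" using path_edge_in_delta_iff[OF Pe_path Pe(2), of Z] Pe(3) Z(4,5) by simp
  then show thesis by (rule that[OF Z(1,2) cut(1) _ cut(2)])
qed

lemma cut_subset_of_inner_cut:
  assumes Z: "Z \<subseteq> X" "s \<in> Z" and le: "cut_le V E ends s t C (delta E ends Z)"
  shows "C \<subseteq> delta E ends Z"
proof
  fix g assume "g \<in> C"
  then obtain Q where Q: "Q \<in> QQ" "snd Q ! first_pos C Q = g" by (rule cut_edge_first_on_orth)
  define fq where "fq = first_pos C Q"
  have Qp: "path Q" "fst Q ! 0 = s" using orth_path[OF Q(1)] by auto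
  note Qc = orth_crossing[OF Q(1), folded fq_def]
  have "fst Q ! fq \<in> Z"
  proof (rule ccontr)
    assume "fst Q ! fq \<notin> Z"
    then obtain i where "i < fq" "snd Q ! i \<in> delta E ends Z"
      using path_exit_edge[OF Qp(1), of fq Z] Qc(1) Qp(2) Z(2) by auto
    moreover from this(1) Qc(1) have "i < length (snd Q)" by simp
    ultimately have "first_pos (delta E ends Z) Q \<le> i"
      unfolding first_pos_def by (intro Least_le) simp
    with \<open>i < fq\<close> have "first_pos (delta E ends Z) Q < fq" by simp
    moreover have "st_path V E ends s t Q" using QQ(1) Q(1) unfolding st_system_def by blast
    with le have "fq \<le> first_pos (delta E ends Z) Q" unfolding cut_le_def fq_def by blast
    ultimately show False by simp
  qed
  moreover have "fst Q ! Suc fq \<notin> Z" using Qc(1) Qc(3)[of "Suc fq"] Z(1) by auto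
  ultimately show "g \<in> delta E ends Z"
    using path_edge_in_delta_iff[OF Qp(1) Qc(1)] Q(2) unfolding fq_def by simp
qed

lemma orthogonal_if_cut_rerouted:
  assumes L: "st_system V E ends s t L" and used: "C \<subseteq> edges_of L'"
    and first: "\<And>P' x g y. P' \<in> L' \<Longrightarrow> (x,g,y) \<in> darts P' \<Longrightarrow> g \<in> C \<Longrightarrow> \<exists>P\<in>L. g = snd P ! first_pos C P"
  shows "orthogonal C L"
proof -
  have first_C: "snd P ! first_pos C P \<in> C" "snd P ! first_pos C P \<in> set (snd P)" if "P \<in> L" for P
    using st_path_crossing(1,2) L that unfolding st_system_def by auto
  have on_L: "\<exists>P\<in>L. g = snd P ! first_pos C P" if g: "g \<in> C" for g
  proof -
    from g used obtain P' where P': "P' \<in> L'" "g \<in> set (snd P')" unfolding edges_of_def by blast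
    obtain x y where "(x,g,y) \<in> darts P'" using path_edge_dart[OF P'(2)] by blast
    from first[OF P'(1) this g] show ?thesis .
  qed
  have "C \<inter> set (snd P) = {snd P ! first_pos C P}" if P: "P \<in> L" for P
  proof (intro equalityI subsetI)
    fix g assume g: "g \<in> C \<inter> set (snd P)"
    then obtain P2 where P2: "P2 \<in> L" "g = snd P2 ! first_pos C P2" using on_L by blast
    with first_C(2) have "g \<in> set (snd P2)" by blast
    with g P P2(1) L have "P2 = P" unfolding st_system_def by blast
    with P2(2) show "g \<in> {snd P ! first_pos C P}" by simp
  next
    fix g assume "g \<in> {snd P ! first_pos C P}"
    with first_C[OF P] show "g \<in> C \<inter> set (snd P)" by simp
  qed
  then have "card (C \<inter> set (snd P)) = 1" if "P \<in> L" for P using that by simp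
  moreover have "C \<subseteq> edges_of L"
  proof
    fix g assume "g \<in> C"
    with on_L obtain P where "P \<in> L" "g = snd P ! first_pos C P" by blast
    with first_C(2) show "g \<in> edges_of L" unfolding edges_of_def by blast
  qed
  ultimately show ?thesis unfolding orthogonal_def by blast
qed

theorem linking_system_orthogonal:
  assumes forced: "\<forall>S. links V E ends s t S \<longrightarrow> e \<in> edges_of S"
    and e: "e \<in> C" "e \<notin> delta E ends {s}"
    and minimal: "\<forall>C'. EM_cut V E ends s t C' \<and> e \<in> C' \<longrightarrow> cut_le V E ends s t C C'"
    and L: "links V E ends s t L"
  shows "orthogonal C L"
proof -
  obtain L' where L': "links V E ends s t L'" "crosses_outward L'" "spares_unused_tails L'"
    and first: "\<And>P' x g y. P' \<in> L' \<Longrightarrow> (x,g,y) \<in> darts P' \<Longrightarrow> g \<in> C \<Longrightarrow>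
       \<exists>P\<in>L. g = snd P ! first_pos C P"
    by (rule rerouted_linking_system[OF L]) blast
  obtain Z where Z: "Z \<subseteq> X" "s \<in> Z" "EM_cut V E ends s t (delta E ends Z)" "e \<in> delta E ends Z"
      "delta E ends Z \<subseteq> edges_of L'"
    by (rule inner_cut[OF forced e L'])
  have "C \<subseteq> delta E ends Z"
    using minimal Z(3,4) by (intro cut_subset_of_inner_cut[OF Z(1,2)]) blast
  also have "\<dots> \<subseteq> edges_of L'" by (rule Z(5))
  finally have used: "C \<subseteq> edges_of L'" .
  have "st_system V E ends s t L" using L unfolding links_def by blast
  then show ?thesis using used first by (rule orthogonal_if_cut_rerouted)
qed

end

theorem lemma3p8:
  fixes V :: "'v set" and E :: "'e set" and ends :: "'e \<Rightarrow> 'v set"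
    and s t :: 'v and e :: 'e and C :: "'e set"
  assumes "grapht V E ends s t"
    and "linked V E ends s t"
    and "\<forall>\<P>. links V E ends s t \<P> \<longrightarrow> e \<in> edges_of \<P>"
    and "e \<in> E - delta E ends {s}"
    and "EM_cut V E ends s t C" and "e \<in> C"
    and "\<forall>C'. EM_cut V E ends s t C' \<and> e \<in> C' \<longrightarrow> cut_le V E ends s t C C'"
  shows "\<forall>\<P>. linkage V E ends s t \<P> \<longrightarrow> orthogonal C \<P>"
proof (intro allI impI)
  fix L assume "linkage V E ends s t L"
  then have L: "links V E ends s t L" unfolding linkage_def by blast
  interpret st_graph V E ends s t by unfold_locales (fact assms(1))
  obtain X QQ where "X \<subseteq> V" "s \<in> X" "t \<notin> X" "C = delta E ends X"
    "st_system V E ends s t QQ" "orthogonal C QQ"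
    using EM_cut_oriented[OF assms(5)] assms(6) by blast
  then interpret oriented_EM_cut V E ends s t C X QQ by unfold_locales
  show "orthogonal C L"
    using linking_system_orthogonal[OF assms(3) _ _ assms(7) L] assms(4,6) by blast
qed

end
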